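(* For every $t\in\mathtt T_J$: $t$ is strongly normalizing for $\to_{d\beta}$ if and only if $t$ is strongly normalizing for $\to_\beta\cup\to_\pi$.
   Context: Terms $\mathtt T_J$: $t,u,r ::= x \mid \lambda x.t \mid t(u,y.r)$ ($y$ bound in $r$), up to $\alpha$-equivalence; $\{u/x\}t$ capture-avoiding substitution. List contexts $\mathtt D ::= \Diamond \mid t(u,y.\mathtt D)$. Distant beta: $\mathtt D\langle\lambda x.t\rangle(u,y.r) \mapsto_{d\beta} \{\{u/x\}\mathtt D\langle t\rangle/y\}r$ (variables bound by $\mathtt D$ not free in $u$, $x$ not in $\mathtt D$). Rules of $\Lambda J$: $\beta$: $(\lambda x.t)(u,y.r)\mapsto\{\{u/x\}t/y\}r$; $\pi$: $t(u,x.r)(u',y.r')\mapsto t(u,x.r(u',y.r'))$ (with $x\notin\mathrm{fv}(u')\cup\mathrm{fv}(r')$). Each of $\to_{d\beta},\to_\beta,\to_\pi$ is the closure of the corresponding rule under all term contexts. A term is strongly normalizing for a relation if it admits no infinite reduction sequence. *)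

theory Defs
  imports Main
begin

text \<open>Terms of Lambda-J in de Bruijn notation (so alpha-equivalence is syntactic
equality).  \<open>JApp t u r\<close> represents t(u, y.r): the variable y is bound in r
and is represented by index 0 in r.  \<open>JLam t\<close> represents \<lambda>x.t, x being index 0 in t.\<close>

datatype tm = JVar nat | JLam tm | JApp tm tm tm

fun lift :: "nat \<Rightarrow> tm \<Rightarrow> tm" where
  "lift k (JVar i) = (if i < k then JVar i else JVar (Suc i))"
| "lift k (JLam t) = JLam (lift (Suc k) t)"
| "lift k (JApp t u r) = JApp (lift k t) (lift k u) (lift (Suc k) r)"

fun subst :: "nat \<Rightarrow> tm \<Rightarrow> tm \<Rightarrow> tm" where
  "subst k s (JVar i) = (if i < k then JVar i else if i = k then s else JVar (i - 1))"
| "subst k s (JLam t) = JLam (subst (Suc k) (lift 0 s) t)"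
| "subst k s (JApp t u r) = JApp (subst k s t) (subst k s u) (subst (Suc k) (lift 0 s) r)"

text \<open>List contexts D ::= hole | t(u, y.D), represented as the list of pairs (t,u)
from the outside in.\<close>
type_synonym lctx = "(tm \<times> tm) list"

fun plug :: "lctx \<Rightarrow> tm \<Rightarrow> tm" where
  "plug [] s = s"
| "plug ((t, u) # D) s = JApp t u (plug D s)"

inductive dbeta_rule :: "tm \<Rightarrow> tm \<Rightarrow> bool" where
  "dbeta_rule (JApp (plug D (JLam t)) u r)
              (subst 0 (plug D (subst 0 ((lift 0 ^^ length D) u) t)) r)"

inductive beta_rule :: "tm \<Rightarrow> tm \<Rightarrow> bool" where
  "beta_rule (JApp (JLam t) u r) (subst 0 (subst 0 u t) r)"

inductive pi_rule :: "tm \<Rightarrow> tm \<Rightarrow> bool" where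
  "pi_rule (JApp (JApp t u r) u' r') (JApp t u (JApp r (lift 0 u') (lift 1 r')))"

inductive ctx_clos :: "(tm \<Rightarrow> tm \<Rightarrow> bool) \<Rightarrow> tm \<Rightarrow> tm \<Rightarrow> bool" for R where
  root: "R t s \<Longrightarrow> ctx_clos R t s"
| lam: "ctx_clos R t s \<Longrightarrow> ctx_clos R (JLam t) (JLam s)"
| app1: "ctx_clos R t s \<Longrightarrow> ctx_clos R (JApp t u r) (JApp s u r)"
| app2: "ctx_clos R u s \<Longrightarrow> ctx_clos R (JApp t u r) (JApp t s r)"
| app3: "ctx_clos R r s \<Longrightarrow> ctx_clos R (JApp t u r) (JApp t u s)"

definition step_dbeta :: "tm \<Rightarrow> tm \<Rightarrow> bool" where
  "step_dbeta = ctx_clos dbeta_rule"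
definition step_beta :: "tm \<Rightarrow> tm \<Rightarrow> bool" where
  "step_beta = ctx_clos beta_rule"
definition step_pi :: "tm \<Rightarrow> tm \<Rightarrow> bool" where
  "step_pi = ctx_clos pi_rule"

definition SN :: "(tm \<Rightarrow> tm \<Rightarrow> bool) \<Rightarrow> tm \<Rightarrow> bool" where
  "SN R t \<longleftrightarrow> \<not> (\<exists>f. f 0 = t \<and> (\<forall>i. R (f i) (f (Suc i))))"

end

theory Submission
  imports Defs "HOL-Library.Multiset" "HOL-Library.Function_Algebras"
begin

text \<open>Both sides of the equivalence are characterised by typability in a quantitative
(non-idempotent) intersection type system for \<Lambda>J, whose judgements record the size of the
derivation. The application rule types the head and the argument with nonempty multisets of
types, so that no subterm, not even an erased one, escapes typing.

A typable term is strongly normalising for both relations: a d\<beta>-step (and hence a \<beta>-step)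
strictly decreases the size of the derivation, since the substitution lemma is additive in sizes,
whereas a \<pi>-step merely regroups the derivation without increasing its size, and decreases a
weight in which the head of an application counts twice.

Conversely, a strongly normalising term is typable, by induction along its reducts and its
subterms: the typing of a reduct is expanded back to the term. Subject expansion holds for root
\<beta>-, \<pi>- and d\<beta>-redexes with typable subterms, and it propagates through heads and through
bodies of applications with a neutral head, which can be given any type. Every term is neutral,
an abstraction under a list context, or has a d\<beta>-redex in such a position.\<close>

section \<open>Types and contexts\<close>

datatype ty = Base | Arr "ty multiset" ty

type_synonym ctx = "nat \<Rightarrow> ty multiset"

(* Keeps sums of contexts folded; otherwise the simplifier eta-expands them under binders. *)
declare plus_fun_apply [simp del] zero_fun_apply [simp del]

definition ctx_le :: "ctx \<Rightarrow> ctx \<Rightarrow> bool" where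
  "ctx_le G D \<longleftrightarrow> (\<forall>i. G i \<subseteq># D i)"

definition ctx_ins :: "ctx \<Rightarrow> nat \<Rightarrow> ty multiset \<Rightarrow> ctx" (\<open>_\<langle>_:_\<rangle>\<close> [90, 0, 0] 91) where
  "G\<langle>k:M\<rangle> = (\<lambda>i. if i < k then G i else if i = k then M else G (i - 1))"

definition ctx_del :: "nat \<Rightarrow> ctx \<Rightarrow> ctx" where
  "ctx_del k G = (\<lambda>i. if i < k then G i else G (Suc i))"

lemma ctx_le_refl [simp]: "ctx_le G G"
  by (simp add: ctx_le_def)

lemma ctx_le_trans [trans]: "ctx_le G1 G2 \<Longrightarrow> ctx_le G2 G3 \<Longrightarrow> ctx_le G1 G3"
  by (meson ctx_le_def subset_mset.order_trans)

lemma ctx_le_add_mono: "ctx_le G G' \<Longrightarrow> ctx_le D D' \<Longrightarrow> ctx_le (G + D) (G' + D')"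
  by (simp add: ctx_le_def plus_fun_apply subset_mset.add_mono)

lemma ctx_le_addI1: "ctx_le G (G + D)"
  by (simp add: ctx_le_def plus_fun_apply)

lemma ctx_le_addI2: "ctx_le D (G + D)"
  by (simp add: ctx_le_def plus_fun_apply)

lemma ctx_le_addD1: "ctx_le (G + D) E \<Longrightarrow> ctx_le G E"
  using ctx_le_addI1 ctx_le_trans by blast

lemma ctx_ins_at [simp]: "(G\<langle>k:M\<rangle>) k = M"
  by (simp add: ctx_ins_def)

lemma ctx_ins_0_Suc [simp]: "(G\<langle>0:M\<rangle>) (Suc i) = G i"
  by (simp add: ctx_ins_def)

lemma ctx_ins_add: "G\<langle>k:M\<rangle> + D\<langle>k:N\<rangle> = (G + D)\<langle>k:M + N\<rangle>"
  by (auto simp: ctx_ins_def plus_fun_apply)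

lemma ctx_ins_commute: "G\<langle>0:N\<rangle>\<langle>Suc k:M\<rangle> = G\<langle>k:M\<rangle>\<langle>0:N\<rangle>"
  by (auto simp: ctx_ins_def fun_eq_iff)

lemma ctx_ins_del: "(ctx_del k G)\<langle>k:G k\<rangle> = G"
  by (auto simp: ctx_ins_def ctx_del_def fun_eq_iff)

lemma ctx_del_ins [simp]: "ctx_del k (G\<langle>k:M\<rangle>) = G"
  by (auto simp: ctx_ins_def ctx_del_def fun_eq_iff)

lemma ctx_del_Suc: "ctx_del (Suc k) (G\<langle>0:N\<rangle>) = (ctx_del k G)\<langle>0:N\<rangle>"
  by (auto simp: ctx_ins_def ctx_del_def fun_eq_iff)

lemma ctx_del_add: "ctx_del k (G + D) = ctx_del k G + ctx_del k D"
  by (auto simp: ctx_del_def plus_fun_apply)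

lemma ctx_le_del: "ctx_le G D \<Longrightarrow> ctx_le (ctx_del k G) (ctx_del k D)"
  by (simp add: ctx_le_def ctx_del_def)

lemma ctx_le_ins [simp]: "ctx_le (G\<langle>k:M\<rangle>) (D\<langle>k:N\<rangle>) \<longleftrightarrow> M \<subseteq># N \<and> ctx_le G D"
proof
  assume le: "ctx_le (G\<langle>k:M\<rangle>) (D\<langle>k:N\<rangle>)"
  show "M \<subseteq># N \<and> ctx_le G D"
    using le[unfolded ctx_le_def, rule_format, of k] ctx_le_del[OF le, of k] by simp
qed (auto simp: ctx_le_def ctx_ins_def)

lemma ctx_le_ins_right: "ctx_le G (D\<langle>k:M\<rangle>) \<longleftrightarrow> G k \<subseteq># M \<and> ctx_le (ctx_del k G) D"
  by (metis ctx_ins_del ctx_le_ins)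

definition ctx_shift :: "nat \<Rightarrow> ctx \<Rightarrow> ctx" where
  "ctx_shift k G = (\<lambda>i. if i < k then {#} else G (i - k))"

lemma ctx_shift_0 [simp]: "ctx_shift 0 G = G"
  by (simp add: ctx_shift_def)

lemma ctx_shift_Suc: "ctx_shift (Suc k) G = (ctx_shift k G)\<langle>0:{#}\<rangle>"
  by (auto simp: ctx_shift_def ctx_ins_def fun_eq_iff)

lemma ctx_shift_Suc': "ctx_shift (Suc k) G = ctx_shift k (G\<langle>0:{#}\<rangle>)"
  by (auto simp: ctx_shift_def ctx_ins_def fun_eq_iff)

lemma ctx_shift_zero [simp]: "ctx_shift k 0 = 0"
  by (auto simp: ctx_shift_def zero_fun_apply)

lemma subseteq_image_mset_exists: "N \<subseteq># image_mset f P \<Longrightarrow> \<exists>P'. P' \<subseteq># P \<and> image_mset f P' = N"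
proof (induction N arbitrary: P)
  case empty
  then show ?case by (intro exI[of _ "{#}"]) auto
next
  case (add x N)
  then have "x \<in># image_mset f P" by (meson insert_subset_eq_iff)
  then obtain p where p: "p \<in># P" "f p = x" by auto
  have "N \<subseteq># image_mset f P - {#x#}" using add.prems by (simp add: insert_subset_eq_iff)
  also have "\<dots> = image_mset f (P - {#p#})" using p by (simp add: image_mset_Diff)
  finally obtain P0 where "P0 \<subseteq># P - {#p#}" "image_mset f P0 = N" using add.IH by blast
  then have "add_mset p P0 \<subseteq># P" "image_mset f (add_mset p P0) = add_mset x N"
    using p by (auto simp: insert_subset_eq_iff)
  then show ?case by blast
qed

definition arrs :: "(ty multiset \<times> ty) multiset \<Rightarrow> ty multiset" where
  "arrs P = image_mset (case_prod Arr) P"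

definition doms :: "(ty multiset \<times> ty) multiset \<Rightarrow> ty multiset" where
  "doms P = \<Sum>\<^sub># (image_mset fst P)"

definition cods :: "(ty multiset \<times> ty) multiset \<Rightarrow> ty multiset" where
  "cods P = image_mset snd P"

lemma arrs_simps [simp]:
  "arrs {#} = {#}" "arrs (add_mset (M, \<sigma>) P) = add_mset (Arr M \<sigma>) (arrs P)"
  "arrs (P + Q) = arrs P + arrs Q" "arrs P = {#} \<longleftrightarrow> P = {#}"
  by (auto simp: arrs_def)

lemma doms_simps [simp]:
  "doms {#} = {#}" "doms (add_mset (M, \<sigma>) P) = M + doms P" "doms (P + Q) = doms P + doms Q"
  by (auto simp: doms_def)

lemma cods_simps [simp]:
  "cods {#} = {#}" "cods (add_mset (M, \<sigma>) P) = add_mset \<sigma> (cods P)" "cods (P + Q) = cods P + cods Q"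
  by (auto simp: cods_def)

lemma doms_mono: "P' \<subseteq># P \<Longrightarrow> doms P' \<subseteq># doms P"
  by (metis doms_simps(3) mset_subset_eq_add_left subset_mset.add_diff_inverse)

lemma arrs_mono: "P' \<subseteq># P \<Longrightarrow> arrs P' \<subseteq># arrs P"
  by (simp add: arrs_def image_mset_subseteq_mono)

lemma doms_const: "doms (image_mset (\<lambda>\<tau>. ({#\<sigma>#}, \<tau>)) N) = replicate_mset (size N) \<sigma>"
  by (induction N) auto

lemma cods_const: "cods (image_mset (\<lambda>\<tau>. (M, \<tau>)) N) = N"
  by (induction N) auto

section \<open>Quantitative typing\<close>

text \<open>In \<open>typed_app\<close>, each pair \<open>(M, \<tau>)\<close> of \<open>P\<close> stands for an arrow type \<open>M \<rightarrow> \<tau>\<close> of the head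
that is consumed by the argument and yields a type of the bound variable; \<open>A\<close> collects unused
types of the head. Contexts are affine: \<open>ctx_le\<close> discards unused assumptions.\<close>

inductive typed :: "ctx \<Rightarrow> tm \<Rightarrow> ty \<Rightarrow> nat \<Rightarrow> bool"
  and mtyped :: "ctx \<Rightarrow> tm \<Rightarrow> ty multiset \<Rightarrow> nat \<Rightarrow> bool" where
  typed_var: "\<sigma> \<in># G i \<Longrightarrow> typed G (JVar i) \<sigma> 1"
| typed_lam: "typed (G\<langle>0:M\<rangle>) t \<sigma> n \<Longrightarrow> typed G (JLam t) (Arr M \<sigma>) (Suc n)"
| typed_app: "mtyped G1 t (arrs P + A) n1 \<Longrightarrow> arrs P + A \<noteq> {#} \<Longrightarrow>
    mtyped G2 u B n2 \<Longrightarrow> B \<noteq> {#} \<Longrightarrow> doms P \<subseteq># B \<Longrightarrow>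
    typed (G3\<langle>0:N\<rangle>) r \<sigma> n3 \<Longrightarrow> N \<subseteq># cods P \<Longrightarrow>
    ctx_le (G1 + G2 + G3) G \<Longrightarrow> typed G (JApp t u r) \<sigma> (Suc (n1 + n2 + n3))"
| mtyped_empty: "mtyped G t {#} 0"
| mtyped_add: "typed G1 t \<sigma> n1 \<Longrightarrow> mtyped G2 t A n2 \<Longrightarrow> ctx_le (G1 + G2) G \<Longrightarrow>
    mtyped G t (add_mset \<sigma> A) (n1 + n2)"

inductive_cases typed_varE: "typed G (JVar i) \<sigma> n"
inductive_cases typed_lamE: "typed G (JLam t) \<sigma> n"
inductive_cases typed_appE': "typed G (JApp t u r) \<sigma> n"

lemma typed_appE:
  assumes "typed G (JApp t u r) \<sigma> n"
  obtains G1 P A n1 G2 B n2 N G3 n3 where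
    "mtyped G1 t (arrs P + A) n1" "arrs P + A \<noteq> {#}"
    "mtyped G2 u B n2" "B \<noteq> {#}" "doms P \<subseteq># B"
    "typed (G3\<langle>0:N\<rangle>) r \<sigma> n3" "N \<subseteq># cods P"
    "ctx_le (G1 + G2 + G3) G" "n = Suc (n1 + n2 + n3)"
  using assms by (elim typed_appE') (rule that; simp)

lemma
  shows typed_weaken: "typed G t \<sigma> n \<Longrightarrow> ctx_le G G' \<Longrightarrow> typed G' t \<sigma> n"
    and mtyped_weaken: "mtyped G t A n \<Longrightarrow> ctx_le G G' \<Longrightarrow> mtyped G' t A n"
proof (induction arbitrary: G' and G' rule: typed_mtyped.inducts)
  case (typed_var \<sigma> G i)
  then show ?case by (meson ctx_le_def mset_subset_eqD typed_mtyped.typed_var)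
next
  case (typed_lam G M t \<sigma> n)
  then show ?case by (auto intro!: typed_mtyped.typed_lam)
qed (meson ctx_le_trans typed_mtyped.intros)+

lemma typed_ctx_ins_0: "typed G t \<sigma> n \<Longrightarrow> typed ((ctx_del 0 G)\<langle>0:G 0\<rangle>) t \<sigma> n"
  by (simp add: ctx_ins_del)

lemma mtyped_single: "typed G t \<sigma> n \<Longrightarrow> mtyped G t {#\<sigma>#} n"
  using mtyped_add[of G t \<sigma> n 0 "{#}" 0 G] mtyped_empty by simp

lemma mtyped_remove:
  "mtyped G t A n \<Longrightarrow> \<sigma> \<in># A \<Longrightarrow>
    \<exists>G1 G2 n1 n2. typed G1 t \<sigma> n1 \<and> mtyped G2 t (A - {#\<sigma>#}) n2 \<and> ctx_le (G1 + G2) G \<and> n = n1 + n2"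
proof (induction rule: typed_mtyped.inducts(2)[where ?P1.0="\<lambda>_ _ _ _. True"])
  case (mtyped_add G1 t \<tau> n1 G2 A n2 G)
  show ?case
  proof (cases "\<sigma> = \<tau>")
    case True
    then show ?thesis using mtyped_add by auto
  next
    case False
    then obtain H1 H2 m1 m2 where h: "typed H1 t \<sigma> m1" "mtyped H2 t (A - {#\<sigma>#}) m2"
      "ctx_le (H1 + H2) G2" "n2 = m1 + m2"
      using mtyped_add by auto
    have "mtyped (G1 + H2) t (add_mset \<tau> A - {#\<sigma>#}) (n1 + m2)"
      using typed_mtyped.mtyped_add[OF mtyped_add(1) h(2)] False by simp
    moreover have "ctx_le (H1 + (G1 + H2)) G"
    proof -
      have "ctx_le (H1 + (G1 + H2)) (G1 + G2)"
        using ctx_le_add_mono[OF ctx_le_refl h(3)] by (simp add: add_ac)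
      then show ?thesis using \<open>ctx_le (G1 + G2) G\<close> by (rule ctx_le_trans)
    qed
    ultimately show ?thesis using h(1,4) by force
  qed
qed auto

lemma mtyped_union: "mtyped G1 t A n1 \<Longrightarrow> mtyped G2 t B n2 \<Longrightarrow> mtyped (G1 + G2) t (A + B) (n1 + n2)"
proof (induction rule: typed_mtyped.inducts(2)[where ?P1.0="\<lambda>_ _ _ _. True"])
  case (mtyped_empty G t)
  show ?case using mtyped_weaken[OF mtyped_empty.prems ctx_le_addI2] by simp
next
  case (mtyped_add H1 t \<sigma> m1 H2 A m2 G)
  have "ctx_le (H1 + (H2 + G2)) (G + G2)"
    using ctx_le_add_mono[OF \<open>ctx_le (H1 + H2) G\<close> ctx_le_refl] by (simp add: add.assoc)
  then show ?case
    using typed_mtyped.mtyped_add[OF \<open>typed H1 t \<sigma> m1\<close> mtyped_add.IH[OF mtyped_add.prems]]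
    by (simp add: add.assoc)
qed auto

lemma mtyped_split:
  "mtyped G t (A + B) n \<Longrightarrow>
    \<exists>G1 G2 n1 n2. mtyped G1 t A n1 \<and> mtyped G2 t B n2 \<and> ctx_le (G1 + G2) G \<and> n = n1 + n2"
proof (induction A arbitrary: G n)
  case empty
  have "mtyped 0 t {#} 0" "ctx_le (0 + G) G"
    by (simp_all add: mtyped_empty)
  then show ?case using empty by fastforce
next
  case (add \<sigma> A)
  then obtain H1 H2 m1 m2 where h: "typed H1 t \<sigma> m1" "mtyped H2 t (A + B) m2"
    "ctx_le (H1 + H2) G" "n = m1 + m2"
    using mtyped_remove[OF add.prems, of \<sigma>] by auto
  obtain K1 K2 k1 k2 where k: "mtyped K1 t A k1" "mtyped K2 t B k2" "ctx_le (K1 + K2) H2" "m2 = k1 + k2"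
    using add.IH[OF h(2)] by blast
  have "mtyped (H1 + K1) t (add_mset \<sigma> A) (m1 + k1)"
    by (rule mtyped_add[OF h(1) k(1) ctx_le_refl])
  moreover have "ctx_le (H1 + K1 + K2) G"
    using ctx_le_trans[OF ctx_le_add_mono[OF ctx_le_refl k(3)] h(3)] by (simp add: add.assoc)
  ultimately show ?case using k(2,4) h(4) by (metis add.assoc)
qed

lemma mtyped_subset:
  assumes "A' \<subseteq># A" "mtyped G t A n"
  obtains n' where "n' \<le> n" "mtyped G t A' n'"
proof -
  have "mtyped G t (A' + (A - A')) n"
    using assms by (simp add: subset_mset.add_diff_inverse)
  then obtain G1 G2 n1 n2 where "mtyped G1 t A' n1" "ctx_le (G1 + G2) G" "n = n1 + n2"
    using mtyped_split by blast
  then show thesis using that mtyped_weaken ctx_le_addD1 le_add1 by metis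
qed

lemma mtyped_split_subset:
  assumes "mtyped D s M m" "M1 + M2 \<subseteq># M"
  obtains D1 D2 m1 m2 where "mtyped D1 s M1 m1" "mtyped D2 s M2 m2" "ctx_le (D1 + D2) D" "m1 + m2 \<le> m"
proof -
  obtain m' where "m' \<le> m" "mtyped D s (M1 + M2) m'"
    using mtyped_subset[OF assms(2,1)] by blast
  then show thesis using that mtyped_split by fastforce
qed

lemma mtyped_replicate: "typed G t \<sigma> n \<Longrightarrow> \<exists>G' m. mtyped G' t (replicate_mset k \<sigma>) m"
proof (induction k)
  case 0
  then show ?case using mtyped_empty by auto
next
  case (Suc k)
  then obtain G' m where "mtyped G' t (replicate_mset k \<sigma>) m" by auto
  then have "mtyped (G + G') t (add_mset \<sigma> (replicate_mset k \<sigma>)) (n + m)"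
    by (rule mtyped_add[OF Suc.prems _ ctx_le_refl])
  then show ?case by auto
qed

section \<open>Lifting and substitution\<close>

lemma
  shows typed_lift: "typed G t \<sigma> n \<Longrightarrow> typed (G\<langle>k:M\<rangle>) (lift k t) \<sigma> n"
    and mtyped_lift: "mtyped G t A n \<Longrightarrow> mtyped (G\<langle>k:M\<rangle>) (lift k t) A n"
proof (induction arbitrary: k M and k M rule: typed_mtyped.inducts)
  case (typed_var \<sigma> G i)
  then show ?case by (auto simp: ctx_ins_def intro!: typed_mtyped.typed_var[simplified])
next
  case (typed_lam G M' t \<sigma> n)
  then show ?case
    using typed_lam.IH[of "Suc k" M] by (auto simp: ctx_ins_commute intro!: typed_mtyped.typed_lam)
next
  case (typed_app G1 t P A n1 G2 u B n2 G3 N r \<sigma> n3 G)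
  have "typed (G3\<langle>k:{#}\<rangle>\<langle>0:N\<rangle>) (lift (Suc k) r) \<sigma> n3"
    using typed_app.IH(3)[of "Suc k" "{#}"] by (simp add: ctx_ins_commute)
  moreover have "ctx_le (G1\<langle>k:{#}\<rangle> + G2\<langle>k:{#}\<rangle> + G3\<langle>k:{#}\<rangle>) (G\<langle>k:M\<rangle>)"
    using \<open>ctx_le (G1 + G2 + G3) G\<close> by (simp add: ctx_ins_add)
  ultimately show ?case
    using typed_mtyped.typed_app[OF typed_app.IH(1) _ typed_app.IH(2)] typed_app.hyps by simp
next
  case (mtyped_add G1 t \<sigma> n1 G2 A n2 G)
  have "ctx_le (G1\<langle>k:{#}\<rangle> + G2\<langle>k:{#}\<rangle>) (G\<langle>k:M\<rangle>)"
    using \<open>ctx_le (G1 + G2) G\<close> by (simp add: ctx_ins_add)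
  then show ?case using typed_mtyped.mtyped_add mtyped_add.IH by blast
qed (simp add: typed_mtyped.mtyped_empty)

lemma mtyped_lift_funpow: "mtyped G u A m \<Longrightarrow> mtyped (ctx_shift k G) ((lift 0 ^^ k) u) A m"
  by (induction k) (simp_all add: ctx_shift_Suc mtyped_lift)

lemma lift_eq_JVarD: "lift k t = JVar i \<Longrightarrow> \<exists>j. t = JVar j \<and> i = (if j < k then j else Suc j)"
  by (cases t) (auto split: if_splits)

lemma lift_eq_JLamD: "lift k t = JLam s \<Longrightarrow> \<exists>t'. t = JLam t' \<and> s = lift (Suc k) t'"
  by (cases t) (auto split: if_splits)

lemma lift_eq_JAppD:
  "lift k t = JApp a b c \<Longrightarrow> \<exists>a' b' c'. t = JApp a' b' c' \<and> a = lift k a' \<and> b = lift k b' \<and> c = lift (Suc k) c'"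
  by (cases t) (auto split: if_splits)

lemma
  shows typed_unlift: "typed G s \<sigma> n \<Longrightarrow> s = lift k t \<Longrightarrow> typed (ctx_del k G) t \<sigma> n"
    and mtyped_unlift: "mtyped G s A n \<Longrightarrow> s = lift k t \<Longrightarrow> mtyped (ctx_del k G) t A n"
proof (induction arbitrary: k t and k t rule: typed_mtyped.inducts)
  case (typed_var \<sigma> G i)
  then obtain j where "t = JVar j" "i = (if j < k then j else Suc j)"
    using lift_eq_JVarD by metis
  then show ?case using typed_var by (auto simp: ctx_del_def intro!: typed_mtyped.typed_var[simplified])
next
  case (typed_lam G M s \<sigma> n)
  then obtain t' where "t = JLam t'" "s = lift (Suc k) t'"
    using lift_eq_JLamD by metis
  then show ?case
    using typed_lam.IH[of "Suc k" t'] by (auto simp: ctx_del_Suc intro!: typed_mtyped.typed_lam)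
next
  case (typed_app G1 a P A n1 G2 b B n2 G3 N c \<sigma> n3 G)
  then obtain a' b' c' where e: "t = JApp a' b' c'" "a = lift k a'" "b = lift k b'" "c = lift (Suc k) c'"
    using lift_eq_JAppD by metis
  have "typed ((ctx_del k G3)\<langle>0:N\<rangle>) c' \<sigma> n3"
    using typed_app.IH(3)[OF e(4)] by (simp add: ctx_del_Suc)
  moreover have "ctx_le (ctx_del k G1 + ctx_del k G2 + ctx_del k G3) (ctx_del k G)"
    using ctx_le_del[OF \<open>ctx_le (G1 + G2 + G3) G\<close>] by (simp add: ctx_del_add)
  ultimately show ?case
    using typed_mtyped.typed_app[OF typed_app.IH(1)[OF e(2)] _ typed_app.IH(2)[OF e(3)]] typed_app.hyps e(1)
    by simp
next
  case (mtyped_add G1 s \<sigma> n1 G2 A n2 G)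
  have "ctx_le (ctx_del k G1 + ctx_del k G2) (ctx_del k G)"
    using ctx_le_del[OF \<open>ctx_le (G1 + G2) G\<close>] by (simp add: ctx_del_add)
  then show ?case using typed_mtyped.mtyped_add mtyped_add.IH mtyped_add.prems by blast
qed (simp add: typed_mtyped.mtyped_empty)

lemma ctx_le_ins_split:
  assumes "ctx_le (G1 + G2) (G\<langle>k:M\<rangle>)" "mtyped D s M m"
  obtains G1' G2' M1 M2 D1 D2 m1 m2 where
    "ctx_le G1 (G1'\<langle>k:M1\<rangle>)" "ctx_le G2 (G2'\<langle>k:M2\<rangle>)" "mtyped D1 s M1 m1" "mtyped D2 s M2 m2"
    "ctx_le (G1' + D1 + (G2' + D2)) (G + D)" "m1 + m2 \<le> m"
proof -
  have sub: "G1 k + G2 k \<subseteq># M" and le: "ctx_le (ctx_del k G1 + ctx_del k G2) G"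
    using assms(1) unfolding ctx_le_ins_right ctx_del_add plus_fun_apply by blast+
  obtain D1 D2 m1 m2 where D: "mtyped D1 s (G1 k) m1" "mtyped D2 s (G2 k) m2"
    "ctx_le (D1 + D2) D" "m1 + m2 \<le> m"
    by (rule mtyped_split_subset[OF assms(2) sub])
  have "ctx_le (ctx_del k G1 + D1 + (ctx_del k G2 + D2)) (G + D)"
    using ctx_le_add_mono[OF le D(3)] by (simp add: add_ac)
  moreover have "ctx_le G1 ((ctx_del k G1)\<langle>k:G1 k\<rangle>)" "ctx_le G2 ((ctx_del k G2)\<langle>k:G2 k\<rangle>)"
    by (simp_all add: ctx_ins_del)
  ultimately show thesis using that D by blast
qed

lemma
  shows typed_subst: "typed G t \<sigma> n \<Longrightarrow> ctx_le G (G0\<langle>k:M\<rangle>) \<Longrightarrow> mtyped D s M m \<Longrightarrow>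
      \<exists>n'. n' \<le> n + m \<and> typed (G0 + D) (subst k s t) \<sigma> n'"
    and mtyped_subst: "mtyped G t A n \<Longrightarrow> ctx_le G (G0\<langle>k:M\<rangle>) \<Longrightarrow> mtyped D s M m \<Longrightarrow>
      \<exists>n'. n' \<le> n + m \<and> mtyped (G0 + D) (subst k s t) A n'"
proof (induction arbitrary: k M G0 D s m and k M G0 D s m rule: typed_mtyped.inducts)
  case (typed_var \<sigma> G i)
  then have \<sigma>: "\<sigma> \<in># (G0\<langle>k:M\<rangle>) i"
    by (meson ctx_le_def mset_subset_eqD)
  show ?case
  proof (cases "i = k")
    case True
    then have "\<sigma> \<in># M" using \<sigma> by simp
    then obtain D1 D2 m1 m2 where s: "typed D1 s \<sigma> m1" "ctx_le (D1 + D2) D" "m = m1 + m2"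
      using mtyped_remove[OF typed_var.prems(2)] by blast
    have "ctx_le D1 (G0 + D)"
      using ctx_le_trans[OF ctx_le_addD1[OF s(2)] ctx_le_addI2] .
    then have "typed (G0 + D) s \<sigma> m1" by (rule typed_weaken[OF s(1)])
    then show ?thesis using True s(3) by (intro exI[of _ m1]) simp
  next
    case False
    then have "\<sigma> \<in># (G0 + D) (if i < k then i else i - 1)"
      using \<sigma> by (auto simp: ctx_ins_def plus_fun_apply split: if_splits)
    then have "typed (G0 + D) (subst k s (JVar i)) \<sigma> 1"
      using False by (auto intro: typed_mtyped.typed_var[simplified])
    then show ?thesis by (intro exI[of _ 1]) simp
  qed
next
  case (typed_lam G M' t \<sigma> n)
  have "ctx_le (G\<langle>0:M'\<rangle>) (G0\<langle>0:M'\<rangle>\<langle>Suc k:M\<rangle>)"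
    using typed_lam.prems(1) by (simp add: ctx_ins_commute)
  moreover have "mtyped (D\<langle>0:{#}\<rangle>) (lift 0 s) M m"
    using typed_lam.prems(2) by (rule mtyped_lift)
  ultimately obtain n' where "n' \<le> n + m" "typed (G0\<langle>0:M'\<rangle> + D\<langle>0:{#}\<rangle>) (subst (Suc k) (lift 0 s) t) \<sigma> n'"
    using typed_lam.IH by blast
  then show ?case by (auto simp: ctx_ins_add intro!: typed_mtyped.typed_lam)
next
  case (typed_app G1 t P A n1 G2 u B n2 G3 N r \<sigma> n3 G)
  obtain G12 G3' M12 M3 D12 D3 m12 m3 where
    s1: "ctx_le (G1 + G2) (G12\<langle>k:M12\<rangle>)" "ctx_le G3 (G3'\<langle>k:M3\<rangle>)"
      "mtyped D12 s M12 m12" "mtyped D3 s M3 m3"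
      "ctx_le (G12 + D12 + (G3' + D3)) (G0 + D)" "m12 + m3 \<le> m"
    using ctx_le_ins_split[OF ctx_le_trans[OF \<open>ctx_le (G1 + G2 + G3) G\<close> typed_app.prems(1)] typed_app.prems(2)] .
  obtain G1' G2' M1 M2 D1 D2 m1 m2 where
    s2: "ctx_le G1 (G1'\<langle>k:M1\<rangle>)" "ctx_le G2 (G2'\<langle>k:M2\<rangle>)" "mtyped D1 s M1 m1" "mtyped D2 s M2 m2"
      "ctx_le (G1' + D1 + (G2' + D2)) (G12 + D12)" "m1 + m2 \<le> m12"
    using ctx_le_ins_split[OF s1(1,3)] .
  obtain n1' where t: "n1' \<le> n1 + m1" "mtyped (G1' + D1) (subst k s t) (arrs P + A) n1'"
    using typed_app.IH(1)[OF s2(1,3)] by blast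
  obtain n2' where u: "n2' \<le> n2 + m2" "mtyped (G2' + D2) (subst k s u) B n2'"
    using typed_app.IH(2)[OF s2(2,4)] by blast
  have "ctx_le (G3\<langle>0:N\<rangle>) (G3'\<langle>0:N\<rangle>\<langle>Suc k:M3\<rangle>)"
    using s1(2) by (simp add: ctx_ins_commute)
  then obtain n3' where "n3' \<le> n3 + m3"
    "typed (G3'\<langle>0:N\<rangle> + D3\<langle>0:{#}\<rangle>) (subst (Suc k) (lift 0 s) r) \<sigma> n3'"
    using typed_app.IH(3) mtyped_lift[OF s1(4)] by blast
  then have r: "n3' \<le> n3 + m3" "typed ((G3' + D3)\<langle>0:N\<rangle>) (subst (Suc k) (lift 0 s) r) \<sigma> n3'"
    by (simp_all add: ctx_ins_add)
  have "ctx_le (G1' + D1 + (G2' + D2) + (G3' + D3)) (G0 + D)"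
    using ctx_le_trans[OF ctx_le_add_mono[OF s2(5) ctx_le_refl] s1(5)] .
  then have "typed (G0 + D) (subst k s (JApp t u r)) \<sigma> (Suc (n1' + n2' + n3'))"
    using typed_mtyped.typed_app[OF t(2) typed_app.hyps(2) u(2) typed_app.hyps(4,5) r(2) typed_app.hyps(7)]
    by (simp add: add.assoc)
  then show ?case using t(1) u(1) r(1) s1(6) s2(6) by (intro exI[of _ "Suc (n1' + n2' + n3')"]) auto
next
  case (mtyped_empty G t)
  then show ?case using typed_mtyped.mtyped_empty by auto
next
  case (mtyped_add G1 t \<sigma> n1 G2 A n2 G)
  obtain G1' G2' M1 M2 D1 D2 m1 m2 where
    s: "ctx_le G1 (G1'\<langle>k:M1\<rangle>)" "ctx_le G2 (G2'\<langle>k:M2\<rangle>)" "mtyped D1 s M1 m1" "mtyped D2 s M2 m2"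
      "ctx_le (G1' + D1 + (G2' + D2)) (G0 + D)" "m1 + m2 \<le> m"
    using ctx_le_ins_split[OF ctx_le_trans[OF \<open>ctx_le (G1 + G2) G\<close> mtyped_add.prems(1)] mtyped_add.prems(2)] .
  obtain n1' where "n1' \<le> n1 + m1" "typed (G1' + D1) (subst k s t) \<sigma> n1'"
    using mtyped_add.IH(1)[OF s(1,3)] by blast
  moreover obtain n2' where "n2' \<le> n2 + m2" "mtyped (G2' + D2) (subst k s t) A n2'"
    using mtyped_add.IH(2)[OF s(2,4)] by blast
  ultimately show ?case
    using typed_mtyped.mtyped_add[OF _ _ s(5)] s(6) by (intro exI[of _ "n1' + n2'"]) auto
qed

lemma typed_antisubst_binder:
  assumes "typed (G1\<langle>Suc k:M\<rangle>) t \<sigma> n" "mtyped D (lift 0 s) M m" "ctx_le (G1 + D) (G\<langle>0:N\<rangle>)"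
  shows "typed ((ctx_del 0 G1)\<langle>k:M\<rangle>\<langle>0:N\<rangle>) t \<sigma> n" "mtyped (ctx_del 0 D) s M m"
    "ctx_le (ctx_del 0 G1 + ctx_del 0 D) G"
proof -
  have "G1 0 \<subseteq># N"
    using ctx_le_addD1[OF assms(3)] by (simp add: ctx_le_ins_right)
  moreover have "G1\<langle>Suc k:M\<rangle> = (ctx_del 0 G1)\<langle>k:M\<rangle>\<langle>0:G1 0\<rangle>"
    by (metis ctx_ins_commute ctx_ins_del)
  ultimately show "typed ((ctx_del 0 G1)\<langle>k:M\<rangle>\<langle>0:N\<rangle>) t \<sigma> n"
    using assms(1) typed_weaken by fastforce
  show "mtyped (ctx_del 0 D) s M m" using mtyped_unlift[OF assms(2) refl] .
  show "ctx_le (ctx_del 0 G1 + ctx_del 0 D) G"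
    using ctx_le_del[OF assms(3), of 0] by (simp add: ctx_del_add)
qed

lemma mtyped_antisubst_of_typed:
  assumes typed_antisubst: "\<forall>G \<sigma> n. typed G (subst k s t) \<sigma> n \<longrightarrow>
     (\<exists>M G1 D n1 m. typed (G1\<langle>k:M\<rangle>) t \<sigma> n1 \<and> mtyped D s M m \<and> ctx_le (G1 + D) G)"
  shows "mtyped G X A n \<Longrightarrow> X = subst k s t \<Longrightarrow>
     \<exists>M G1 D n1 m. mtyped (G1\<langle>k:M\<rangle>) t A n1 \<and> mtyped D s M m \<and> ctx_le (G1 + D) G"
proof (induction rule: typed_mtyped.inducts(2)[where ?P1.0="\<lambda>_ _ _ _. True"])
  case (mtyped_empty G X)
  have "mtyped (0\<langle>k:{#}\<rangle>) t {#} 0" "mtyped 0 s {#} 0" "ctx_le (0 + 0) G"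
    by (simp_all add: typed_mtyped.mtyped_empty ctx_le_def zero_fun_apply)
  then show ?case by blast
next
  case (mtyped_add H1 X \<sigma> n1 H2 A n2 G)
  obtain M1 K1 D1 k1 m1 where a: "typed (K1\<langle>k:M1\<rangle>) t \<sigma> k1" "mtyped D1 s M1 m1" "ctx_le (K1 + D1) H1"
    using typed_antisubst mtyped_add by meson
  obtain M2 K2 D2 k2 m2 where b: "mtyped (K2\<langle>k:M2\<rangle>) t A k2" "mtyped D2 s M2 m2" "ctx_le (K2 + D2) H2"
    using mtyped_add by blast
  have "mtyped ((K1 + K2)\<langle>k:M1 + M2\<rangle>) t (add_mset \<sigma> A) (k1 + k2)"
    by (rule typed_mtyped.mtyped_add[OF a(1) b(1)]) (simp add: ctx_ins_add)
  moreover have "mtyped (D1 + D2) s (M1 + M2) (m1 + m2)"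
    using mtyped_union[OF a(2) b(2)] .
  moreover have "ctx_le (K1 + K2 + (D1 + D2)) G"
    using ctx_le_trans[OF ctx_le_add_mono[OF a(3) b(3)] \<open>ctx_le (H1 + H2) G\<close>] by (simp add: add_ac)
  ultimately show ?case by blast
qed simp

lemma typed_antisubst: "typed G (subst k s t) \<sigma> n \<Longrightarrow>
   \<exists>M G1 D n1 m. typed (G1\<langle>k:M\<rangle>) t \<sigma> n1 \<and> mtyped D s M m \<and> ctx_le (G1 + D) G"
proof (induction t arbitrary: k s G \<sigma> n)
  case (JVar i)
  show ?case
  proof (cases "i = k")
    case True
    then have "mtyped G s {#\<sigma>#} n" using JVar by (simp add: mtyped_single)
    moreover have "typed (0\<langle>k:{#\<sigma>#}\<rangle>) (JVar i) \<sigma> 1"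
      using True typed_var[of \<sigma> "0\<langle>k:{#\<sigma>#}\<rangle>" k] by simp
    moreover have "ctx_le (0 + G) G" by simp
    ultimately show ?thesis by blast
  next
    case False
    then have "\<sigma> \<in># G (if i < k then i else i - 1)"
      using JVar by (auto elim: typed_varE split: if_splits)
    then have "\<sigma> \<in># (G\<langle>k:{#}\<rangle>) i"
      using False by (auto simp: ctx_ins_def split: if_splits)
    then have "typed (G\<langle>k:{#}\<rangle>) (JVar i) \<sigma> 1" by (rule typed_var)
    moreover have "mtyped 0 s {#} 0" "ctx_le (G + 0) G" by (simp_all add: mtyped_empty)
    ultimately show ?thesis by blast
  qed
next
  case (JLam t)
  then obtain M' \<sigma>' n0 where e: "\<sigma> = Arr M' \<sigma>'" "typed (G\<langle>0:M'\<rangle>) (subst (Suc k) (lift 0 s) t) \<sigma>' n0"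
    by (auto elim: typed_lamE)
  obtain M G1 D n1 m where "typed (G1\<langle>Suc k:M\<rangle>) t \<sigma>' n1" "mtyped D (lift 0 s) M m"
    "ctx_le (G1 + D) (G\<langle>0:M'\<rangle>)"
    using JLam.IH[OF e(2)] by blast
  note h = typed_antisubst_binder[OF this]
  have "typed ((ctx_del 0 G1)\<langle>k:M\<rangle>) (JLam t) \<sigma> (Suc n1)"
    using h(1) e(1) by (auto intro: typed_lam)
  then show ?case using h(2,3) by blast
next
  case (JApp t1 t2 t3)
  then have "typed G (JApp (subst k s t1) (subst k s t2) (subst (Suc k) (lift 0 s) t3)) \<sigma> n" by simp
  then obtain G1 P A n1 G2 B n2 N G3 n3 where e:
    "mtyped G1 (subst k s t1) (arrs P + A) n1" "arrs P + A \<noteq> {#}"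
    "mtyped G2 (subst k s t2) B n2" "B \<noteq> {#}" "doms P \<subseteq># B"
    "typed (G3\<langle>0:N\<rangle>) (subst (Suc k) (lift 0 s) t3) \<sigma> n3" "N \<subseteq># cods P" "ctx_le (G1 + G2 + G3) G"
    by (elim typed_appE)
  obtain M1 K1 D1 k1 m1 where a: "mtyped (K1\<langle>k:M1\<rangle>) t1 (arrs P + A) k1" "mtyped D1 s M1 m1" "ctx_le (K1 + D1) G1"
    using mtyped_antisubst_of_typed[of k s t1, OF _ e(1) refl] JApp.IH(1) by blast
  obtain M2 K2 D2 k2 m2 where b: "mtyped (K2\<langle>k:M2\<rangle>) t2 B k2" "mtyped D2 s M2 m2" "ctx_le (K2 + D2) G2"
    using mtyped_antisubst_of_typed[of k s t2, OF _ e(3) refl] JApp.IH(2) by blast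
  obtain M3 K3 D3 k3 m3 where "typed (K3\<langle>Suc k:M3\<rangle>) t3 \<sigma> k3" "mtyped D3 (lift 0 s) M3 m3"
    "ctx_le (K3 + D3) (G3\<langle>0:N\<rangle>)"
    using JApp.IH(3)[OF e(6)] by blast
  note c = typed_antisubst_binder[OF this]
  have "typed ((K1 + K2 + ctx_del 0 K3)\<langle>k:M1 + M2 + M3\<rangle>) (JApp t1 t2 t3) \<sigma> (Suc (k1 + k2 + k3))"
    by (rule typed_app[OF a(1) e(2) b(1) e(4,5) c(1) e(7)]) (simp add: ctx_ins_add)
  moreover have "mtyped (D1 + D2 + ctx_del 0 D3) s (M1 + M2 + M3) (m1 + m2 + m3)"
    using mtyped_union[OF mtyped_union[OF a(2) b(2)] c(2)] .
  moreover have "ctx_le (K1 + K2 + ctx_del 0 K3 + (D1 + D2 + ctx_del 0 D3)) G"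
    using ctx_le_trans[OF ctx_le_add_mono[OF ctx_le_add_mono[OF a(3) b(3)] c(3)] e(8)] by (simp add: add_ac)
  ultimately show ?case by blast
qed

section \<open>Typable terms are strongly normalising\<close>

lemma typed_plug_replace:
  "typed G (plug D X) \<tau> n \<Longrightarrow> \<exists>GX nX. typed GX X \<tau> nX \<and> nX \<le> n \<and>
     (\<forall>X' \<tau>' E n'. typed (GX + ctx_shift (length D) E) X' \<tau>' n' \<longrightarrow>
        typed (G + E) (plug D X') \<tau>' (n - nX + n'))"
proof (induction D arbitrary: G \<tau> n)
  case Nil
  then show ?case by (intro exI[of _ G] exI[of _ n]) auto
next
  case (Cons p D)
  obtain a b where p: "p = (a, b)" by fastforce
  then have "typed G (JApp a b (plug D X)) \<tau> n" using Cons.prems by simp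
  then obtain G1 P A n1 G2 B n2 N G3 n3 where e:
    "mtyped G1 a (arrs P + A) n1" "arrs P + A \<noteq> {#}" "mtyped G2 b B n2" "B \<noteq> {#}" "doms P \<subseteq># B"
    "typed (G3\<langle>0:N\<rangle>) (plug D X) \<tau> n3" "N \<subseteq># cods P" "ctx_le (G1 + G2 + G3) G" "n = Suc (n1 + n2 + n3)"
    by (elim typed_appE)
  obtain GX nX where X: "typed GX X \<tau> nX" "nX \<le> n3"
    and replace: "\<And>X' \<tau>' E n'. typed (GX + ctx_shift (length D) E) X' \<tau>' n' \<Longrightarrow>
      typed (G3\<langle>0:N\<rangle> + E) (plug D X') \<tau>' (n3 - nX + n')"
    using Cons.IH[OF e(6)] by blast
  have "typed (G + E) (plug (p # D) X') \<tau>' (n - nX + n')"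
    if "typed (GX + ctx_shift (length (p # D)) E) X' \<tau>' n'" for X' \<tau>' E n'
  proof -
    have "typed (G3\<langle>0:N\<rangle> + E\<langle>0:{#}\<rangle>) (plug D X') \<tau>' (n3 - nX + n')"
      using that replace by (simp add: ctx_shift_Suc')
    then have "typed ((G3 + E)\<langle>0:N\<rangle>) (plug D X') \<tau>' (n3 - nX + n')"
      by (simp add: ctx_ins_add)
    moreover have "ctx_le (G1 + G2 + (G3 + E)) (G + E)"
      using ctx_le_add_mono[OF e(8) ctx_le_refl] by (simp add: add.assoc)
    ultimately have "typed (G + E) (JApp a b (plug D X')) \<tau>' (Suc (n1 + n2 + (n3 - nX + n')))"
      by (rule typed_app[OF e(1-5) _ e(7)])
    moreover have "Suc (n1 + n2 + (n3 - nX + n')) = n - nX + n'"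
      using e(9) X(2) by simp
    ultimately show ?thesis using p by simp
  qed
  then show ?case using X e(9) by (intro exI[of _ GX] exI[of _ nX]) auto
qed

lemma mtyped_dbeta_contract:
  "mtyped Ga (plug D (JLam v)) (arrs P) na \<Longrightarrow> mtyped Gu u (doms P) nu \<Longrightarrow>
    \<exists>m. mtyped (Ga + Gu) (plug D (subst 0 ((lift 0 ^^ length D) u) v)) (cods P) m \<and> m + size P \<le> na + nu"
proof (induction P arbitrary: Ga Gu na nu)
  case empty
  then show ?case using mtyped_empty by fastforce
next
  case (add p P)
  obtain M \<tau> where p: "p = (M, \<tau>)" by fastforce
  obtain Ga1 Ga2 d na2 where a: "typed Ga1 (plug D (JLam v)) (Arr M \<tau>) d"
    "mtyped Ga2 (plug D (JLam v)) (arrs P) na2" "ctx_le (Ga1 + Ga2) Ga" "na = d + na2"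
    using mtyped_remove[OF add.prems(1), of "Arr M \<tau>"] p by auto
  obtain Gu1 Gu2 mu1 mu2 where b: "mtyped Gu1 u M mu1" "mtyped Gu2 u (doms P) mu2"
    "ctx_le (Gu1 + Gu2) Gu" "nu = mu1 + mu2"
    using mtyped_split[of Gu u M "doms P" nu] add.prems(2) p by auto
  obtain GX nX where x: "typed GX (JLam v) (Arr M \<tau>) nX" "nX \<le> d"
    and replace: "\<And>X' \<tau>' E n'. typed (GX + ctx_shift (length D) E) X' \<tau>' n' \<Longrightarrow>
      typed (Ga1 + E) (plug D X') \<tau>' (d - nX + n')"
    using typed_plug_replace[OF a(1)] by blast
  obtain n0 where v: "typed (GX\<langle>0:M\<rangle>) v \<tau> n0" "nX = Suc n0"
    using x(1) by (auto elim: typed_lamE)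
  obtain n' where s: "n' \<le> n0 + mu1"
    "typed (GX + ctx_shift (length D) Gu1) (subst 0 ((lift 0 ^^ length D) u) v) \<tau> n'"
    using typed_subst[OF v(1) ctx_le_refl mtyped_lift_funpow[OF b(1)]] by blast
  obtain m where ih: "mtyped (Ga2 + Gu2) (plug D (subst 0 ((lift 0 ^^ length D) u) v)) (cods P) m"
    "m + size P \<le> na2 + mu2"
    using add.IH[OF a(2) b(2)] by blast
  have "ctx_le (Ga1 + Gu1 + (Ga2 + Gu2)) (Ga + Gu)"
    using ctx_le_add_mono[OF a(3) b(3)] by (simp add: add_ac)
  then have "mtyped (Ga + Gu) (plug D (subst 0 ((lift 0 ^^ length D) u) v)) (add_mset \<tau> (cods P))
      (d - nX + n' + m)"
    by (rule mtyped_add[OF replace[OF s(2)] ih(1)])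
  moreover have "d - nX + n' + m + size (add_mset p P) \<le> na + nu"
    using ih(2) s(1) v(2) x(2) a(4) b(4) by simp
  ultimately show ?case using p by auto
qed

lemma dbeta_rule_typed:
  assumes "typed G R \<sigma> n" "dbeta_rule R R'"
  shows "\<exists>n'. n' < n \<and> typed G R' \<sigma> n'"
proof -
  from assms(2) obtain D t u r where R: "R = JApp (plug D (JLam t)) u r"
    and R': "R' = subst 0 (plug D (subst 0 ((lift 0 ^^ length D) u) t)) r"
    by (cases rule: dbeta_rule.cases) auto
  obtain G1 P A n1 G2 B n2 N G3 n3 where e:
    "mtyped G1 (plug D (JLam t)) (arrs P + A) n1" "mtyped G2 u B n2" "doms P \<subseteq># B"
    "typed (G3\<langle>0:N\<rangle>) r \<sigma> n3" "N \<subseteq># cods P" "ctx_le (G1 + G2 + G3) G" "n = Suc (n1 + n2 + n3)"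
    using assms(1) unfolding R by (elim typed_appE)
  obtain P' where P': "P' \<subseteq># P" "cods P' = N"
    using subseteq_image_mset_exists[of N snd P] e(5) by (auto simp: cods_def)
  obtain n1' where a: "n1' \<le> n1" "mtyped G1 (plug D (JLam t)) (arrs P') n1'"
    using mtyped_subset[OF subset_mset.order_trans[OF arrs_mono[OF P'(1)] mset_subset_eq_add_left] e(1)] .
  obtain n2' where b: "n2' \<le> n2" "mtyped G2 u (doms P') n2'"
    using mtyped_subset[OF _ e(2), of "doms P'"] doms_mono[OF P'(1)] e(3) subset_mset.order_trans by blast
  obtain m where k: "mtyped (G1 + G2) (plug D (subst 0 ((lift 0 ^^ length D) u) t)) N m"
    "m + size P' \<le> n1' + n2'"
    using mtyped_dbeta_contract[OF a(2) b(2)] P'(2) by blast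
  have "ctx_le (G3\<langle>0:N\<rangle>) (G3\<langle>0:N\<rangle>)" by simp
  then obtain n' where s: "n' \<le> n3 + m" "typed (G3 + (G1 + G2)) R' \<sigma> n'"
    using typed_subst[OF e(4) _ k(1)] unfolding R' by blast
  have "typed G R' \<sigma> n'"
    using typed_weaken[OF s(2)] e(6) by (simp add: add_ac)
  moreover have "n' < n" using s(1) k(2) a(1) b(1) e(7) by simp
  ultimately show ?thesis by blast
qed

lemma mtyped_shrink:
  assumes "\<forall>G \<sigma> n. typed G t \<sigma> n \<longrightarrow> (\<exists>n'. n' + c \<le> n \<and> typed G s \<sigma> n')"
  shows "mtyped G X A n \<Longrightarrow> X = t \<Longrightarrow> \<exists>n'. n' + c * size A \<le> n \<and> mtyped G s A n'"
proof (induction rule: typed_mtyped.inducts(2)[where ?P1.0="\<lambda>_ _ _ _. True"])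
  case (mtyped_empty G t)
  then show ?case using typed_mtyped.mtyped_empty by auto
next
  case (mtyped_add G1 X \<sigma> n1 G2 A n2 G)
  obtain n1' where a: "n1' + c \<le> n1" "typed G1 s \<sigma> n1'" using assms mtyped_add by meson
  obtain n2' where b: "n2' + c * size A \<le> n2" "mtyped G2 s A n2'" using mtyped_add by blast
  have "mtyped G s (add_mset \<sigma> A) (n1' + n2')"
    by (rule typed_mtyped.mtyped_add[OF a(2) b(2) \<open>ctx_le (G1 + G2) G\<close>])
  then show ?case using a(1) b(1) by (intro exI[of _ "n1' + n2'"]) auto
qed simp

lemma ctx_clos_typed:
  assumes "\<And>G t t' \<sigma> n. typed G t \<sigma> n \<Longrightarrow> \<rho> t t' \<Longrightarrow> \<exists>n'. n' + c \<le> n \<and> typed G t' \<sigma> n'"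
  shows "ctx_clos \<rho> t t' \<Longrightarrow> typed G t \<sigma> n \<Longrightarrow> \<exists>n'. n' + c \<le> n \<and> typed G t' \<sigma> n'"
proof (induction arbitrary: G \<sigma> n rule: ctx_clos.induct)
  case (root t s)
  then show ?case using assms by blast
next
  case (lam t s)
  obtain M \<sigma>' n0 where e: "\<sigma> = Arr M \<sigma>'" "typed (G\<langle>0:M\<rangle>) t \<sigma>' n0" "n = Suc n0"
    using lam.prems by (auto elim: typed_lamE)
  obtain n' where "n' + c \<le> n0" "typed (G\<langle>0:M\<rangle>) s \<sigma>' n'" using lam.IH[OF e(2)] by blast
  then show ?case using e by (intro exI[of _ "Suc n'"]) (auto intro: typed_lam)
next
  case (app1 t s u r)
  obtain G1 P A n1 G2 B n2 N G3 n3 where e: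
    "mtyped G1 t (arrs P + A) n1" "arrs P + A \<noteq> {#}" "mtyped G2 u B n2" "B \<noteq> {#}" "doms P \<subseteq># B"
    "typed (G3\<langle>0:N\<rangle>) r \<sigma> n3" "N \<subseteq># cods P" "ctx_le (G1 + G2 + G3) G" "n = Suc (n1 + n2 + n3)"
    using app1.prems by (elim typed_appE)
  obtain n1' where a: "n1' + c * size (arrs P + A) \<le> n1" "mtyped G1 s (arrs P + A) n1'"
    using mtyped_shrink[of t c s, OF _ e(1) refl] app1.IH by blast
  have "c \<le> c * size (arrs P + A)" using e(2) by (cases "arrs P + A") auto
  then have "Suc (n1' + n2 + n3) + c \<le> n" using a(1) e(9) by linarith
  then show ?case using typed_app[OF a(2) e(2-8)] by blast
next
  case (app2 u s t r)
  obtain G1 P A n1 G2 B n2 N G3 n3 where e: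
    "mtyped G1 t (arrs P + A) n1" "arrs P + A \<noteq> {#}" "mtyped G2 u B n2" "B \<noteq> {#}" "doms P \<subseteq># B"
    "typed (G3\<langle>0:N\<rangle>) r \<sigma> n3" "N \<subseteq># cods P" "ctx_le (G1 + G2 + G3) G" "n = Suc (n1 + n2 + n3)"
    using app2.prems by (elim typed_appE)
  obtain n2' where a: "n2' + c * size B \<le> n2" "mtyped G2 s B n2'"
    using mtyped_shrink[of u c s, OF _ e(3) refl] app2.IH by blast
  have "c \<le> c * size B" using e(4) by (cases B) auto
  then have "Suc (n1 + n2' + n3) + c \<le> n" using a(1) e(9) by linarith
  then show ?case using typed_app[OF e(1,2) a(2) e(4-8)] by blast
next
  case (app3 r s t u)
  obtain G1 P A n1 G2 B n2 N G3 n3 where e: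
    "mtyped G1 t (arrs P + A) n1" "arrs P + A \<noteq> {#}" "mtyped G2 u B n2" "B \<noteq> {#}" "doms P \<subseteq># B"
    "typed (G3\<langle>0:N\<rangle>) r \<sigma> n3" "N \<subseteq># cods P" "ctx_le (G1 + G2 + G3) G" "n = Suc (n1 + n2 + n3)"
    using app3.prems by (elim typed_appE)
  obtain n3' where a: "n3' + c \<le> n3" "typed (G3\<langle>0:N\<rangle>) s \<sigma> n3'"
    using app3.IH[OF e(6)] by blast
  then show ?case using typed_app[OF e(1-5) a(2) e(7,8)] e(9)
    by (intro exI[of _ "Suc (n1 + n2 + n3')"]) auto
qed

lemma step_dbeta_typed: "step_dbeta t t' \<Longrightarrow> typed G t \<sigma> n \<Longrightarrow> \<exists>n'. n' < n \<and> typed G t' \<sigma> n'"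
  using ctx_clos_typed[of dbeta_rule 1] dbeta_rule_typed unfolding step_dbeta_def
  by (metis Suc_eq_plus1 Suc_le_eq)

lemma mtyped_app_merge:
  "mtyped G X A n \<Longrightarrow> X = JApp t u r \<Longrightarrow> A \<noteq> {#} \<Longrightarrow>
    \<exists>Q Q0 B N Ga Gb Gc na nb nc. mtyped Ga t (arrs Q + Q0) na \<and> arrs Q + Q0 \<noteq> {#} \<and>
      mtyped Gb u B nb \<and> B \<noteq> {#} \<and> doms Q \<subseteq># B \<and> mtyped (Gc\<langle>0:N\<rangle>) r A nc \<and> N \<subseteq># cods Q \<and>
      ctx_le (Ga + Gb + Gc) G \<and> na + nb + nc + size A \<le> n"
proof (induction rule: typed_mtyped.inducts(2)[where ?P1.0="\<lambda>_ _ _ _. True"])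
  case (mtyped_add H1 X \<sigma> n1 H2 A n2 G)
  obtain Q1 A1 B1 N1 Ga1 Gb1 Gc1 na1 nb1 nc1 where e:
    "mtyped Ga1 t (arrs Q1 + A1) na1" "arrs Q1 + A1 \<noteq> {#}" "mtyped Gb1 u B1 nb1" "B1 \<noteq> {#}"
    "doms Q1 \<subseteq># B1" "typed (Gc1\<langle>0:N1\<rangle>) r \<sigma> nc1" "N1 \<subseteq># cods Q1"
    "ctx_le (Ga1 + Gb1 + Gc1) H1" "n1 = Suc (na1 + nb1 + nc1)"
    using mtyped_add.hyps(1) unfolding mtyped_add.prems(1) by (elim typed_appE)
  show ?case
  proof (cases "A = {#}")
    case True
    have "mtyped (Gc1\<langle>0:N1\<rangle>) r (add_mset \<sigma> A) nc1" using mtyped_single[OF e(6)] True by simp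
    moreover have "ctx_le (Ga1 + Gb1 + Gc1) G"
      using ctx_le_trans[OF e(8) ctx_le_addD1[OF \<open>ctx_le (H1 + H2) G\<close>]] .
    moreover have "na1 + nb1 + nc1 + size (add_mset \<sigma> A) \<le> n1 + n2" using e(9) True by simp
    ultimately show ?thesis using e(1-5,7) by blast
  next
    case False
    obtain Q2 A2 B2 N2 Ga2 Gb2 Gc2 na2 nb2 nc2 where f:
      "mtyped Ga2 t (arrs Q2 + A2) na2" "mtyped Gb2 u B2 nb2" "doms Q2 \<subseteq># B2"
      "mtyped (Gc2\<langle>0:N2\<rangle>) r A nc2" "N2 \<subseteq># cods Q2" "ctx_le (Ga2 + Gb2 + Gc2) H2"
      "na2 + nb2 + nc2 + size A \<le> n2"
      using mtyped_add.IH mtyped_add.prems(1) False by blast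
    have "mtyped (Ga1 + Ga2) t (arrs (Q1 + Q2) + (A1 + A2)) (na1 + na2)"
      using mtyped_union[OF e(1) f(1)] by (simp add: add_ac)
    moreover have "arrs (Q1 + Q2) + (A1 + A2) \<noteq> {#}" using e(2) by auto
    moreover have "mtyped (Gb1 + Gb2) u (B1 + B2) (nb1 + nb2)" using mtyped_union[OF e(3) f(2)] .
    moreover have "doms (Q1 + Q2) \<subseteq># B1 + B2" using e(5) f(3) by (simp add: subset_mset.add_mono)
    moreover have "mtyped ((Gc1 + Gc2)\<langle>0:N1 + N2\<rangle>) r (add_mset \<sigma> A) (nc1 + nc2)"
      by (rule typed_mtyped.mtyped_add[OF e(6) f(4)]) (simp add: ctx_ins_add)
    moreover have "N1 + N2 \<subseteq># cods (Q1 + Q2)" using e(7) f(5) by (simp add: subset_mset.add_mono)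
    moreover have "ctx_le (Ga1 + Ga2 + (Gb1 + Gb2) + (Gc1 + Gc2)) G"
      using ctx_le_trans[OF ctx_le_add_mono[OF e(8) f(6)] \<open>ctx_le (H1 + H2) G\<close>] by (simp add: add_ac)
    moreover have "na1 + na2 + (nb1 + nb2) + (nc1 + nc2) + size (add_mset \<sigma> A) \<le> n1 + n2"
      using e(9) f(7) by simp
    ultimately show ?thesis using e(4) by blast
  qed
qed auto

lemma pi_rule_typed:
  assumes "typed G R \<sigma> n" "pi_rule R R'"
  shows "\<exists>n'. n' \<le> n \<and> typed G R' \<sigma> n'"
proof -
  from assms(2) obtain t u r u' r' where R: "R = JApp (JApp t u r) u' r'"
    and R': "R' = JApp t u (JApp r (lift 0 u') (lift 1 r'))"
    by (cases rule: pi_rule.cases) auto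
  obtain G1 P A n1 G2 B n2 N G3 n3 where e:
    "mtyped G1 (JApp t u r) (arrs P + A) n1" "arrs P + A \<noteq> {#}" "mtyped G2 u' B n2" "B \<noteq> {#}"
    "doms P \<subseteq># B" "typed (G3\<langle>0:N\<rangle>) r' \<sigma> n3" "N \<subseteq># cods P" "ctx_le (G1 + G2 + G3) G"
    "n = Suc (n1 + n2 + n3)"
    using assms(1) unfolding R by (elim typed_appE)
  obtain Q Q0 Bq Nq Ga Gb Gc na nb nc where m:
    "mtyped Ga t (arrs Q + Q0) na" "arrs Q + Q0 \<noteq> {#}" "mtyped Gb u Bq nb" "Bq \<noteq> {#}"
    "doms Q \<subseteq># Bq" "mtyped (Gc\<langle>0:Nq\<rangle>) r (arrs P + A) nc" "Nq \<subseteq># cods Q"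
    "ctx_le (Ga + Gb + Gc) G1" "na + nb + nc + size (arrs P + A) \<le> n1"
    using mtyped_app_merge[OF e(1) refl e(2)] by blast
  have "mtyped (G2\<langle>0:{#}\<rangle>) (lift 0 u') B n2" using e(3) by (rule mtyped_lift)
  moreover have "typed (G3\<langle>0:{#}\<rangle>\<langle>0:N\<rangle>) (lift 1 r') \<sigma> n3"
    using typed_lift[OF e(6), of 1 "{#}"] by (simp add: ctx_ins_commute)
  moreover have "ctx_le (Gc\<langle>0:Nq\<rangle> + G2\<langle>0:{#}\<rangle> + G3\<langle>0:{#}\<rangle>) ((Gc + G2 + G3)\<langle>0:Nq\<rangle>)"
    by (simp add: ctx_ins_add)
  ultimately have inner: "typed ((Gc + G2 + G3)\<langle>0:Nq\<rangle>) (JApp r (lift 0 u') (lift 1 r')) \<sigma> (Suc (nc + n2 + n3))"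
    using typed_app[OF m(6) e(2) _ e(4,5) _ e(7)] by blast
  have "ctx_le (Ga + Gb + (Gc + G2 + G3)) G"
    using ctx_le_trans[OF ctx_le_add_mono[OF ctx_le_add_mono[OF m(8) ctx_le_refl] ctx_le_refl] e(8)]
    by (simp add: add_ac)
  then have "typed G R' \<sigma> (Suc (na + nb + Suc (nc + n2 + n3)))"
    unfolding R' by (rule typed_app[OF m(1-5) inner m(7)])
  moreover have "Suc (na + nb + Suc (nc + n2 + n3)) \<le> n"
    using m(9) e(9) e(2) by (cases "arrs P + A") auto
  ultimately show ?thesis by blast
qed

lemma step_pi_typed: "step_pi t t' \<Longrightarrow> typed G t \<sigma> n \<Longrightarrow> \<exists>n'. n' \<le> n \<and> typed G t' \<sigma> n'"
  using ctx_clos_typed[of pi_rule 0] pi_rule_typed unfolding step_pi_def by simp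

lemma beta_rule_dbeta_rule: "beta_rule t t' \<Longrightarrow> dbeta_rule t t'"
proof (induction rule: beta_rule.induct)
  case (1 t u r)
  show ?case using dbeta_rule.intros[of "[]" t u r] by simp
qed

lemma step_beta_typed: "step_beta t t' \<Longrightarrow> typed G t \<sigma> n \<Longrightarrow> \<exists>n'. n' < n \<and> typed G t' \<sigma> n'"
  using ctx_clos_typed[of beta_rule 1] dbeta_rule_typed beta_rule_dbeta_rule unfolding step_beta_def
  by (metis Suc_eq_plus1 Suc_le_eq)

(* The head of an application counts twice, so that every \<pi>-step decreases the weight. *)
fun weight :: "tm \<Rightarrow> nat" where
  "weight (JVar i) = 1"
| "weight (JLam t) = Suc (weight t)"
| "weight (JApp t u r) = 2 * weight t + weight u + weight r"

lemma weight_pos: "0 < weight t"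
  by (induction t) auto

lemma weight_lift [simp]: "weight (lift k t) = weight t"
  by (induction t arbitrary: k) auto

lemma step_pi_weight_less: "step_pi t t' \<Longrightarrow> weight t' < weight t"
  unfolding step_pi_def
proof (induction rule: ctx_clos.induct)
  case (root t t')
  then show ?case using weight_pos by (cases rule: pi_rule.cases) auto
qed auto

lemma typed_termip_dbeta: "typed G t \<sigma> n \<Longrightarrow> termip step_dbeta t"
proof (induction n arbitrary: G t \<sigma> rule: less_induct)
  case (less n)
  show ?case
  proof (rule accp.accI)
    fix t' assume "step_dbeta\<inverse>\<inverse> t' t"
    then show "termip step_dbeta t'" using step_dbeta_typed less by fastforce
  qed
qed

lemma typed_termip_beta_pi: "typed G t \<sigma> n \<Longrightarrow> termip (\<lambda>a b. step_beta a b \<or> step_pi a b) t"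
proof (induction n arbitrary: G t \<sigma> rule: less_induct)
  case (less n)
  note size_IH = less.IH
  from less.prems show ?case
  proof (induction t arbitrary: G rule: measure_induct_rule[of weight])
    case (less t)
    show ?case
    proof (rule accp.accI)
      fix t' assume "(\<lambda>a b. step_beta a b \<or> step_pi a b)\<inverse>\<inverse> t' t"
      then have "step_beta t t' \<or> step_pi t t'" by simp
      then show "termip (\<lambda>a b. step_beta a b \<or> step_pi a b) t'"
      proof
        assume "step_beta t t'"
        then show ?thesis using step_beta_typed less.prems size_IH by blast
      next
        assume pi: "step_pi t t'"
        then obtain n' where n': "n' \<le> n" "typed G t' \<sigma> n'" using step_pi_typed less.prems by blast
        show ?thesis
        proof (cases "n' = n")
          case True
          then show ?thesis using less.IH step_pi_weight_less[OF pi] n'(2) by blast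
        next
          case False
          then have "n' < n" using n'(1) by simp
          then show ?thesis using size_IH n'(2) by blast
        qed
      qed
    qed
  qed
qed

section \<open>Strongly normalising terms are typable\<close>

definition typable :: "tm \<Rightarrow> bool" where
  "typable t \<longleftrightarrow> (\<exists>G \<sigma> n. typed G t \<sigma> n)"

definition flexible :: "tm \<Rightarrow> bool" where
  "flexible t \<longleftrightarrow> (\<forall>\<sigma>. \<exists>G n. typed G t \<sigma> n)"

inductive proper_subterm :: "tm \<Rightarrow> tm \<Rightarrow> bool" where
  "proper_subterm t (JLam t)"
| "proper_subterm s t \<Longrightarrow> proper_subterm s (JLam t)"
| "proper_subterm t (JApp t u r)"
| "proper_subterm u (JApp t u r)"
| "proper_subterm r (JApp t u r)"
| "proper_subterm s t \<Longrightarrow> proper_subterm s (JApp t u r)"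
| "proper_subterm s u \<Longrightarrow> proper_subterm s (JApp t u r)"
| "proper_subterm s r \<Longrightarrow> proper_subterm s (JApp t u r)"

lemma proper_subterm_trans: "proper_subterm t r \<Longrightarrow> proper_subterm s t \<Longrightarrow> proper_subterm s r"
  by (induction rule: proper_subterm.induct) (auto intro: proper_subterm.intros)

lemma proper_subterm_size: "proper_subterm s t \<Longrightarrow> size s < size t"
  by (induction rule: proper_subterm.induct) auto

lemma proper_subterm_ctx_clos:
  "proper_subterm s t \<Longrightarrow> ctx_clos \<rho> s s' \<Longrightarrow> \<exists>t'. ctx_clos \<rho> t t' \<and> proper_subterm s' t'"
  by (induction rule: proper_subterm.induct) (blast intro: ctx_clos.intros proper_subterm.intros)+

inductive neutral :: "tm \<Rightarrow> bool" where
  "neutral (JVar i)"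
| "neutral a \<Longrightarrow> neutral c \<Longrightarrow> neutral (JApp a b c)"

lemma mtyped_flexible: "flexible t \<Longrightarrow> \<exists>G n. mtyped G t A n"
proof (induction A)
  case empty
  then show ?case using mtyped_empty by blast
next
  case (add \<sigma> A)
  then obtain G n where "mtyped G t A n" by blast
  moreover obtain G1 n1 where "typed G1 t \<sigma> n1" using add.prems flexible_def by blast
  ultimately show ?case using mtyped_add[OF _ _ ctx_le_refl] by blast
qed

lemma typed_app_flexible:
  assumes a: "flexible a" and b: "typed Gb b \<sigma>b nb" and c: "typed (Gc\<langle>0:N\<rangle>) c \<sigma> nc"
  shows "\<exists>G m. typed G (JApp a b c) \<sigma> m"
proof -
  \<comment> \<open>The head needs at least one arrow, as it must be typed with a nonempty multiset.\<close>
  define N' where "N' = (if N = {#} then {#Base#} else N)"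
  have N': "N' \<noteq> {#}" "N \<subseteq># N'" by (auto simp: N'_def)
  define P where "P = image_mset (\<lambda>\<tau>. ({#\<sigma>b#}, \<tau>)) N'"
  obtain G1 n1 where head: "mtyped G1 a (arrs P + {#}) n1" using mtyped_flexible[OF a, of "arrs P + {#}"] by blast
  obtain G2 n2 where arg: "mtyped G2 b (replicate_mset (size N') \<sigma>b) n2" using mtyped_replicate[OF b] by blast
  have "doms P \<subseteq># replicate_mset (size N') \<sigma>b" "N \<subseteq># cods P"
    using N' by (simp_all add: P_def doms_const cods_const)
  then have "typed (G1 + G2 + Gc) (JApp a b c) \<sigma> (Suc (n1 + n2 + nc))"
    using typed_app[OF head _ arg _ _ c _ ctx_le_refl] N'(1) by (simp add: P_def)
  then show ?thesis by blast
qed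

lemma neutral_flexible:
  "neutral t \<Longrightarrow> (\<forall>s. proper_subterm s t \<longrightarrow> typable s) \<Longrightarrow> flexible t"
proof (induction rule: neutral.induct)
  case (1 i)
  have "typed (\<lambda>j. {#\<tau>#}) (JVar i) \<tau> 1" for \<tau> by (rule typed_var) simp
  then show ?case unfolding flexible_def by blast
next
  case (2 a c b)
  have "flexible a" "flexible c" using 2 by (meson proper_subterm.intros)+
  moreover obtain Gb \<sigma>b nb where "typed Gb b \<sigma>b nb"
    using 2(5) proper_subterm.intros(4) typable_def by blast
  ultimately show ?case
    unfolding flexible_def using typed_app_flexible typed_ctx_ins_0 by (metis flexible_def)
qed

lemma mtyped_unlift_funpow: "mtyped G ((lift 0 ^^ k) u) A m \<Longrightarrow> \<exists>G'. mtyped G' u A m"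
proof (induction k arbitrary: G)
  case (Suc k)
  then show ?case using mtyped_unlift[of G _ A m 0 "(lift 0 ^^ k) u"] by auto
qed auto

lemma mtyped_dbeta_expand:
  "mtyped G0 (plug D (subst 0 ((lift 0 ^^ length D) u) v)) N m \<Longrightarrow>
    \<exists>P Ga Gu na nu. cods P = N \<and> mtyped Ga (plug D (JLam v)) (arrs P) na \<and> mtyped Gu u (doms P) nu"
proof (induction N arbitrary: G0 m)
  case empty
  have "cods {#} = {#} \<and> mtyped 0 (plug D (JLam v)) (arrs {#}) 0 \<and> mtyped 0 u (doms {#}) 0"
    by (simp add: mtyped_empty)
  then show ?case by blast
next
  case (add \<tau> N)
  obtain G1 G2 m1 m2 where e: "typed G1 (plug D (subst 0 ((lift 0 ^^ length D) u) v)) \<tau> m1"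
      "mtyped G2 (plug D (subst 0 ((lift 0 ^^ length D) u) v)) N m2"
    using mtyped_remove[OF add.prems, of \<tau>] by auto
  obtain P Ga Gu na nu where IH: "cods P = N" "mtyped Ga (plug D (JLam v)) (arrs P) na" "mtyped Gu u (doms P) nu"
    using add.IH[OF e(2)] by blast
  obtain GX nX where X: "typed GX (subst 0 ((lift 0 ^^ length D) u) v) \<tau> nX"
    and replace: "\<And>X' \<tau>' E n'. typed (GX + ctx_shift (length D) E) X' \<tau>' n' \<Longrightarrow>
      typed (G1 + E) (plug D X') \<tau>' (m1 - nX + n')"
    using typed_plug_replace[OF e(1)] by blast
  obtain M GV Du n1 mu where a: "typed (GV\<langle>0:M\<rangle>) v \<tau> n1" "mtyped Du ((lift 0 ^^ length D) u) M mu"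
    "ctx_le (GV + Du) GX"
    using typed_antisubst[OF X] by blast
  have "typed (GX\<langle>0:M\<rangle>) v \<tau> n1" using typed_weaken[OF a(1)] ctx_le_addD1[OF a(3)] by simp
  then have "typed (GX + ctx_shift (length D) 0) (JLam v) (Arr M \<tau>) (Suc n1)"
    by (simp add: typed_lam)
  then have l: "typed (G1 + 0) (plug D (JLam v)) (Arr M \<tau>) (m1 - nX + Suc n1)"
    by (rule replace)
  obtain Du' where "mtyped Du' u M mu" using mtyped_unlift_funpow[OF a(2)] by blast
  then have "mtyped (Du' + Gu) u (doms (add_mset (M, \<tau>) P)) (mu + nu)"
    using mtyped_union[OF _ IH(3)] by simp
  moreover have "mtyped (G1 + Ga) (plug D (JLam v)) (arrs (add_mset (M, \<tau>) P)) (m1 - nX + Suc n1 + na)"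
    using mtyped_add[OF l IH(2)] by (simp add: ctx_le_addI1 ctx_le_add_mono)
  moreover have "cods (add_mset (M, \<tau>) P) = add_mset \<tau> N" using IH(1) by simp
  ultimately show ?case by blast
qed

lemma dbeta_redex_typed_expand:
  assumes "typed G (subst 0 (plug D (subst 0 ((lift 0 ^^ length D) u) v)) r) \<sigma> n"
    and "typable (plug D (JLam v))" and "typable u"
  shows "\<exists>G' n'. typed G' (JApp (plug D (JLam v)) u r) \<sigma> n'"
proof -
  obtain N G1 D0 n1 m where a: "typed (G1\<langle>0:N\<rangle>) r \<sigma> n1"
     "mtyped D0 (plug D (subst 0 ((lift 0 ^^ length D) u) v)) N m"
    using typed_antisubst[OF assms(1)] by blast
  obtain P Ga Gu na nu where k: "cods P = N" "mtyped Ga (plug D (JLam v)) (arrs P) na" "mtyped Gu u (doms P) nu"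
    using mtyped_dbeta_expand[OF a(2)] by blast
  obtain Gl \<rho> nl where l: "typed Gl (plug D (JLam v)) \<rho> nl" using assms(2) typable_def by blast
  obtain Gu0 \<sigma>u nu0 where u0: "typed Gu0 u \<sigma>u nu0" using assms(3) typable_def by blast
  have t: "mtyped (Ga + Gl) (plug D (JLam v)) (arrs P + {#\<rho>#}) (na + nl)"
    using mtyped_union[OF k(2) mtyped_single[OF l]] .
  have u: "mtyped (Gu + Gu0) u (doms P + {#\<sigma>u#}) (nu + nu0)"
    using mtyped_union[OF k(3) mtyped_single[OF u0]] .
  have "typed (Ga + Gl + (Gu + Gu0) + G1) (JApp (plug D (JLam v)) u r) \<sigma> (Suc (na + nl + (nu + nu0) + n1))"
    by (rule typed_app[OF t _ u _ _ a(1) _ ctx_le_refl]) (auto simp: k(1))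
  then show ?thesis by blast
qed

datatype hctx = HHole | HLeft hctx tm tm | HRight tm tm hctx

fun hplug :: "hctx \<Rightarrow> tm \<Rightarrow> tm" where
  "hplug HHole R = R"
| "hplug (HLeft H u r) R = JApp (hplug H R) u r"
| "hplug (HRight a b H) R = JApp a b (hplug H R)"

(* Positions in which subject expansion for d\<beta> goes through. *)
inductive neutral_path :: "hctx \<Rightarrow> bool" where
  "neutral_path HHole"
| "neutral_path H \<Longrightarrow> neutral_path (HLeft H u r)"
| "neutral a \<Longrightarrow> neutral_path H \<Longrightarrow> neutral_path (HRight a b H)"

lemma step_dbeta_hplug: "dbeta_rule R R' \<Longrightarrow> step_dbeta (hplug H R) (hplug H R')"
  unfolding step_dbeta_def by (induction H) (auto intro: ctx_clos.intros)

lemma mtyped_map: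
  assumes "\<forall>G \<sigma> n. typed G X \<sigma> n \<longrightarrow> (\<exists>G' n'. typed G' Y \<sigma> n')"
  shows "mtyped G Z A n \<Longrightarrow> Z = X \<Longrightarrow> \<exists>G' n'. mtyped G' Y A n'"
proof (induction rule: typed_mtyped.inducts(2)[where ?P1.0="\<lambda>_ _ _ _. True"])
  case (mtyped_empty G t)
  then show ?case using typed_mtyped.mtyped_empty by blast
next
  case (mtyped_add G1 t \<sigma> n1 G2 A n2 G)
  obtain H1 m1 where "typed H1 Y \<sigma> m1" using assms mtyped_add by meson
  moreover obtain H2 m2 where "mtyped H2 Y A m2" using mtyped_add by blast
  ultimately show ?case using typed_mtyped.mtyped_add[OF _ _ ctx_le_refl] by blast
qed auto

lemma hplug_typed_expand:
  "neutral_path H \<Longrightarrow> dbeta_rule R R' \<Longrightarrow> (\<forall>s. proper_subterm s (hplug H R) \<longrightarrow> typable s) \<Longrightarrow>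
    typed G (hplug H R') \<sigma> n \<Longrightarrow> \<exists>G' n'. typed G' (hplug H R) \<sigma> n'"
proof (induction arbitrary: G \<sigma> n rule: neutral_path.induct)
  case 1
  from 1(1) obtain D v u r where "R = JApp (plug D (JLam v)) u r"
    "R' = subst 0 (plug D (subst 0 ((lift 0 ^^ length D) u) v)) r"
    by (cases rule: dbeta_rule.cases) auto
  moreover have "typable (plug D (JLam v))" "typable u"
    using 1(2) calculation(1) by (auto intro: proper_subterm.intros)
  ultimately show ?case using dbeta_redex_typed_expand 1(3) by auto
next
  case (2 H u r)
  have "typed G (JApp (hplug H R') u r) \<sigma> n" using 2(5) by simp
  then obtain G1 P A n1 G2 B n2 N G3 n3 where e:
    "mtyped G1 (hplug H R') (arrs P + A) n1" "arrs P + A \<noteq> {#}" "mtyped G2 u B n2" "B \<noteq> {#}"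
    "doms P \<subseteq># B" "typed (G3\<langle>0:N\<rangle>) r \<sigma> n3" "N \<subseteq># cods P"
    by (elim typed_appE)
  have "\<forall>s. proper_subterm s (hplug H R) \<longrightarrow> typable s" using 2(4) by (auto intro: proper_subterm.intros)
  then have "\<forall>G \<sigma> n. typed G (hplug H R') \<sigma> n \<longrightarrow> (\<exists>G' n'. typed G' (hplug H R) \<sigma> n')"
    using 2(2)[OF 2(3)] by blast
  then obtain G1' n1' where "mtyped G1' (hplug H R) (arrs P + A) n1'"
    using mtyped_map[OF _ e(1) refl] by blast
  then have "typed (G1' + G2 + G3) (JApp (hplug H R) u r) \<sigma> (Suc (n1' + n2 + n3))"
    by (rule typed_app[OF _ e(2-7) ctx_le_refl])
  then show ?case by auto
next
  case (3 a H b)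
  have "typed G (JApp a b (hplug H R')) \<sigma> n" using 3(6) by simp
  then obtain G2 B n2 N G3 n3 where e: "mtyped G2 b B n2" "B \<noteq> {#}" "typed (G3\<langle>0:N\<rangle>) (hplug H R') \<sigma> n3"
    by (elim typed_appE)
  have "\<forall>s. proper_subterm s (hplug H R) \<longrightarrow> typable s" using 3(5) by (auto intro: proper_subterm.intros)
  then obtain G' n' where "typed G' (hplug H R) \<sigma> n'" using 3(3)[OF 3(4) _ e(3)] by blast
  moreover obtain \<sigma>b where "\<sigma>b \<in># B" using e(2) by blast
  then obtain Gb nb where "typed Gb b \<sigma>b nb" using mtyped_remove[OF e(1)] by blast
  moreover have "flexible a" using neutral_flexible[OF 3(1)] 3(5) by (auto intro: proper_subterm.intros)
  ultimately show ?case using typed_app_flexible typed_ctx_ins_0 by fastforce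
qed

lemma mtyped_app:
  assumes a: "mtyped G1 a (arrs Q + Q0) n1" "arrs Q + Q0 \<noteq> {#}"
    and b: "mtyped G2 b B n2" "B \<noteq> {#}" "doms Q \<subseteq># B"
  shows "mtyped Gc c A nc \<Longrightarrow> Gc 0 \<subseteq># cods Q \<Longrightarrow> \<exists>G' n'. mtyped G' (JApp a b c) A n'"
proof (induction rule: typed_mtyped.inducts(2)[where ?P1.0="\<lambda>_ _ _ _. True"])
  case (mtyped_empty G t)
  then show ?case using typed_mtyped.mtyped_empty by blast
next
  case (mtyped_add H1 c \<sigma> k1 H2 A k2 G)
  have "H1 0 + H2 0 \<subseteq># cods Q"
    using \<open>ctx_le (H1 + H2) G\<close> mtyped_add.prems subset_mset.order_trans
    by (metis ctx_le_def plus_fun_apply)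
  then have "H1 0 \<subseteq># cods Q" "H2 0 \<subseteq># cods Q"
    by (meson mset_subset_eq_add_left mset_subset_eq_add_right subset_mset.order_trans)+
  then have "typed (G1 + G2 + ctx_del 0 H1) (JApp a b c) \<sigma> (Suc (n1 + n2 + k1))"
    using typed_app[OF a b typed_ctx_ins_0[OF mtyped_add.hyps(1)]] ctx_le_refl by blast
  moreover obtain G' n' where "mtyped G' (JApp a b c) A n'"
    using mtyped_add.IH \<open>H2 0 \<subseteq># cods Q\<close> by blast
  ultimately show ?case using typed_mtyped.mtyped_add[OF _ _ ctx_le_refl] by blast
qed auto

lemma pi_redex_typed_expand:
  assumes "typed G (JApp a b (JApp c (lift 0 u) (lift 1 r))) \<sigma> n"
  shows "\<exists>G' n'. typed G' (JApp (JApp a b c) u r) \<sigma> n'"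
proof -
  obtain G1 Q Q0 n1 G2 B n2 Nx G3 n3 where e:
    "mtyped G1 a (arrs Q + Q0) n1" "arrs Q + Q0 \<noteq> {#}" "mtyped G2 b B n2" "B \<noteq> {#}"
    "doms Q \<subseteq># B" "typed (G3\<langle>0:Nx\<rangle>) (JApp c (lift 0 u) (lift 1 r)) \<sigma> n3" "Nx \<subseteq># cods Q"
    using assms by (rule typed_appE) blast
  obtain Gc P A nc Gu Bu nu Ny Gr nr where f:
    "mtyped Gc c (arrs P + A) nc" "arrs P + A \<noteq> {#}" "mtyped Gu (lift 0 u) Bu nu" "Bu \<noteq> {#}"
    "doms P \<subseteq># Bu" "typed (Gr\<langle>0:Ny\<rangle>) (lift 1 r) \<sigma> nr" "Ny \<subseteq># cods P"
    "ctx_le (Gc + Gu + Gr) (G3\<langle>0:Nx\<rangle>)"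
    using e(6) by (rule typed_appE) blast
  have u: "mtyped (ctx_del 0 Gu) u Bu nu" using mtyped_unlift[OF f(3) refl] .
  have "typed (ctx_del 1 (Gr\<langle>0:Ny\<rangle>)) r \<sigma> nr" using typed_unlift[OF f(6) refl] .
  then have r: "typed ((ctx_del 0 Gr)\<langle>0:Ny\<rangle>) r \<sigma> nr" by (simp add: ctx_del_Suc)
  have "Gc 0 \<subseteq># Nx" using ctx_le_addD1[OF ctx_le_addD1[OF f(8)]] by (simp add: ctx_le_ins_right)
  then obtain G' n' where abc: "mtyped G' (JApp a b c) (arrs P + A) n'"
    using mtyped_app[OF e(1-5) f(1)] e(7) subset_mset.order_trans by blast
  have "typed (G' + ctx_del 0 Gu + ctx_del 0 Gr) (JApp (JApp a b c) u r) \<sigma> (Suc (n' + nu + nr))"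
    by (rule typed_app[OF abc f(2) u f(4,5) r f(7) ctx_le_refl])
  then show ?thesis by blast
qed

lemma neutral_or_abs_or_redex:
  "neutral s \<or> (\<exists>D v. s = plug D (JLam v)) \<or> (\<exists>H R R'. neutral_path H \<and> s = hplug H R \<and> dbeta_rule R R')"
proof (induction s)
  case (JVar i)
  then show ?case by (auto intro: neutral.intros)
next
  case (JLam v)
  then show ?case by (metis plug.simps(1))
next
  case (JApp a b c)
  show ?case
  proof (cases "\<exists>D v. a = plug D (JLam v)")
    case True
    then have "dbeta_rule (JApp a b c) (subst 0 (plug D (subst 0 ((lift 0 ^^ length D) b) v)) c)"
      if "a = plug D (JLam v)" for D v
      using that by (auto intro: dbeta_rule.intros)
    then show ?thesis using True hplug.simps(1) neutral_path.intros(1) by metis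
  next
    case False
    show ?thesis
    proof (cases "neutral a")
      case a: True
      show ?thesis
      proof (cases "\<exists>D v. c = plug D (JLam v)")
        case True
        then show ?thesis by (metis plug.simps(2))
      next
        case False
        then show ?thesis using JApp.IH(3) a
          by (metis hplug.simps(3) neutral.intros(2) neutral_path.intros(3))
      qed
    next
      case a: False
      then show ?thesis using JApp.IH(1) False
        by (metis hplug.simps(2) neutral_path.intros(2))
    qed
  qed
qed

lemma termip_subterm_induct:
  assumes "termip R t"
    and compat: "\<And>s t s'. proper_subterm s t \<Longrightarrow> R s s' \<Longrightarrow> \<exists>t'. R t t' \<and> proper_subterm s' t'"
    and step: "\<And>t. (\<And>t'. R t t' \<Longrightarrow> P t') \<Longrightarrow> (\<And>s. proper_subterm s t \<Longrightarrow> P s) \<Longrightarrow> P t"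
  shows "P t"
proof -
  from assms(1) have "s = t \<or> proper_subterm s t \<Longrightarrow> P s" for s
  proof (induction arbitrary: s rule: accp.induct)
    case (accI t)
    from accI.prems show ?case
    proof (induction s rule: measure_induct_rule[of size])
      case (less s)
      show ?case
      proof (rule step)
        fix s' assume "R s s'"
        show "P s'"
        proof (cases "s = t")
          case True
          then show ?thesis using accI.IH \<open>R s s'\<close> by blast
        next
          case False
          then obtain t' where "R t t'" "proper_subterm s' t'"
            using compat less.prems \<open>R s s'\<close> by blast
          then show ?thesis using accI.IH by blast
        qed
      next
        fix s' assume "proper_subterm s' s"
        then show "P s'"
          using less proper_subterm_trans proper_subterm_size by blast
      qed
    qed
  qed
  then show ?thesis by blast
qed

lemma typable_var: "typable (JVar i)"
  using typed_var[of Base "\<lambda>_. {#Base#}" i] by (auto simp: typable_def)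

lemma typable_lam: "typable t \<Longrightarrow> typable (JLam t)"
  unfolding typable_def by (metis typed_ctx_ins_0 typed_lam)

lemma typable_app_neutral:
  assumes "neutral a" "\<forall>s. proper_subterm s (JApp a u r) \<longrightarrow> typable s"
  shows "typable (JApp a u r)"
proof -
  have "flexible a" using neutral_flexible assms by (blast intro: proper_subterm.intros)
  moreover obtain Gu \<sigma>u nu where "typed Gu u \<sigma>u nu"
    using assms(2) typable_def by (blast intro: proper_subterm.intros)
  moreover obtain Gr \<sigma> nr where "typed Gr r \<sigma> nr"
    using assms(2) typable_def by (blast intro: proper_subterm.intros)
  ultimately show ?thesis
    using typed_app_flexible typed_ctx_ins_0 typable_def by metis
qed

lemma termip_dbeta_typable:
  assumes "termip step_dbeta t"
  shows "typable t"
  using assms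
proof (rule termip_subterm_induct)
  fix s t s' assume "proper_subterm s t" "step_dbeta s s'"
  then show "\<exists>t'. step_dbeta t t' \<and> proper_subterm s' t'"
    using proper_subterm_ctx_clos by (auto simp: step_dbeta_def)
next
  fix t assume reducts: "\<And>t'. step_dbeta t t' \<Longrightarrow> typable t'"
    and subterms: "\<And>s. proper_subterm s t \<Longrightarrow> typable s"
  show "typable t"
  proof (cases t)
    case (JVar i)
    then show ?thesis by (simp add: typable_var)
  next
    case (JLam b)
    then show ?thesis using subterms typable_lam by (blast intro: proper_subterm.intros)
  next
    case (JApp a u r)
    consider "neutral a" | D v where "a = plug D (JLam v)"
      | H R R' where "neutral_path H" "a = hplug H R" "dbeta_rule R R'"
      using neutral_or_abs_or_redex[of a] by blast
    then show ?thesis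
    proof cases
      case 1
      then show ?thesis using typable_app_neutral subterms JApp by simp
    next
      case 2
      let ?t' = "subst 0 (plug D (subst 0 ((lift 0 ^^ length D) u) v)) r"
      have "step_dbeta t ?t'"
        unfolding step_dbeta_def JApp 2 by (auto intro: ctx_clos.root dbeta_rule.intros)
      then obtain G \<sigma> n where "typed G ?t' \<sigma> n" using reducts typable_def by blast
      moreover have "typable (plug D (JLam v))" "typable u"
        using subterms 2 JApp by (auto intro: proper_subterm.intros)
      ultimately show ?thesis
        using dbeta_redex_typed_expand JApp 2 typable_def by blast
    next
      case 3
      have "step_dbeta t (hplug (HLeft H u r) R')"
        using step_dbeta_hplug[OF 3(3), of "HLeft H u r"] JApp 3(2) by simp
      then obtain G \<sigma> n where "typed G (hplug (HLeft H u r) R') \<sigma> n"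
        using reducts typable_def by blast
      moreover have "neutral_path (HLeft H u r)" using 3(1) by (rule neutral_path.intros)
      ultimately show ?thesis
        using hplug_typed_expand[OF _ 3(3)] subterms JApp 3(2) typable_def by fastforce
    qed
  qed
qed

lemma termip_beta_pi_typable:
  assumes "termip (\<lambda>a b. step_beta a b \<or> step_pi a b) t"
  shows "typable t"
  using assms
proof (rule termip_subterm_induct)
  fix s t s' assume "proper_subterm s t" "step_beta s s' \<or> step_pi s s'"
  then show "\<exists>t'. (step_beta t t' \<or> step_pi t t') \<and> proper_subterm s' t'"
    using proper_subterm_ctx_clos[of s t beta_rule s'] proper_subterm_ctx_clos[of s t pi_rule s']
    by (auto simp: step_beta_def step_pi_def)
next
  fix t assume reducts: "\<And>t'. step_beta t t' \<or> step_pi t t' \<Longrightarrow> typable t'"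
    and subterms: "\<And>s. proper_subterm s t \<Longrightarrow> typable s"
  show "typable t"
  proof (cases t)
    case (JVar i)
    then show ?thesis by (simp add: typable_var)
  next
    case (JLam b)
    then show ?thesis using subterms typable_lam by (blast intro: proper_subterm.intros)
  next
    case (JApp a u r)
    show ?thesis
    proof (cases a)
      case (JVar i)
      then show ?thesis using typable_app_neutral subterms JApp by (simp add: neutral.intros)
    next
      case (JLam v)
      have "step_beta t (subst 0 (subst 0 u v) r)"
        unfolding step_beta_def JApp JLam by (auto intro: ctx_clos.root beta_rule.intros)
      then obtain G \<sigma> n where "typed G (subst 0 (subst 0 u v) r) \<sigma> n"
        using reducts typable_def by blast
      then have "typed G (subst 0 (plug [] (subst 0 ((lift 0 ^^ length []) u) v)) r) \<sigma> n"
        by simp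
      moreover have "typable (plug [] (JLam v))" "typable u"
        using subterms JApp JLam by (auto intro: proper_subterm.intros)
      ultimately obtain G' n' where "typed G' (JApp (plug [] (JLam v)) u r) \<sigma> n'"
        using dbeta_redex_typed_expand by blast
      then show ?thesis using JApp JLam typable_def by auto
    next
      case (JApp a1 b1 c1)
      have "step_pi t (JApp a1 b1 (JApp c1 (lift 0 u) (lift 1 r)))"
        unfolding step_pi_def \<open>t = JApp a u r\<close> JApp by (rule ctx_clos.root) (rule pi_rule.intros)
      then obtain G \<sigma> n where "typed G (JApp a1 b1 (JApp c1 (lift 0 u) (lift 1 r))) \<sigma> n"
        using reducts typable_def by blast
      then show ?thesis
        using pi_redex_typed_expand \<open>t = JApp a u r\<close> JApp typable_def by blast
    qed
  qed
qed

lemma SN_iff_termip: "SN R t \<longleftrightarrow> termip R t"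
proof
  assume "SN R t"
  show "termip R t"
  proof (rule ccontr)
    assume "\<not> termip R t"
    then have down: "\<exists>s'. R s s' \<and> \<not> termip R s'" if "\<not> termip R s" for s
      using that by (metis conversep_iff not_accp_down)
    define pick where "pick s = (SOME s'. R s s' \<and> \<not> termip R s')" for s
    have pick: "R s (pick s) \<and> \<not> termip R (pick s)" if "\<not> termip R s" for s
      unfolding pick_def using down[OF that] by (rule someI_ex)
    define f where "f n = (pick ^^ n) t" for n
    have f_0: "f 0 = t" and f_Suc: "f (Suc n) = pick (f n)" for n
      by (simp_all add: f_def)
    have nonterm: "\<not> termip R (f n)" for n
    proof (induction n)
      case 0
      show ?case unfolding f_0 by (rule \<open>\<not> termip R t\<close>)
    next
      case (Suc n)
      show ?case unfolding f_Suc using pick[OF Suc.IH] by (rule conjunct2)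
    qed
    have "R (f n) (f (Suc n))" for n
      unfolding f_Suc using pick[OF nonterm] by (rule conjunct1)
    moreover have "f 0 = t" by (rule f_0)
    ultimately show False using \<open>SN R t\<close> unfolding SN_def by blast
  qed
next
  assume "termip R t"
  then show "SN R t"
  proof (induction rule: accp.induct)
    case (accI s)
    show ?case unfolding SN_def
    proof
      assume "\<exists>f. f 0 = s \<and> (\<forall>i. R (f i) (f (Suc i)))"
      then obtain f where f: "f 0 = s" "\<forall>i. R (f i) (f (Suc i))" by blast
      then have "R s (f 1)" by (metis One_nat_def)
      then have "SN R (f 1)" using accI.IH[of "f 1"] by simp
      moreover have "\<exists>g. g 0 = f 1 \<and> (\<forall>i. R (g i) (g (Suc i)))"
        by (rule exI[of _ "\<lambda>i. f (Suc i)"]) (use f in simp)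
      ultimately show False unfolding SN_def by blast
    qed
  qed
qed

lemma termip_dbeta_iff_typable: "termip step_dbeta t \<longleftrightarrow> typable t"
  using termip_dbeta_typable typed_termip_dbeta unfolding typable_def by blast

lemma termip_beta_pi_iff_typable: "termip (\<lambda>a b. step_beta a b \<or> step_pi a b) t \<longleftrightarrow> typable t"
  using termip_beta_pi_typable typed_termip_beta_pi unfolding typable_def by blast

theorem mainTheorem20:
  fixes t :: tm
  shows "SN step_dbeta t \<longleftrightarrow> SN (\<lambda>a b. step_beta a b \<or> step_pi a b) t"
  by (simp only: SN_iff_termip termip_dbeta_iff_typable termip_beta_pi_iff_typable)

end
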